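(* Let $K$ be a field, $\alpha$ an ordinal and $0<n<\omega$. Then $B_{\alpha,n}\in\mathfrak R_K$, $B_{\alpha,n}$ has Loewy length $\alpha+1$ and top layer dimension $n$. Moreover, if $\alpha$ is countable, then $B_{\alpha,n}$ is of countable type.
   Context: Socle sequence: $S_0=0$, $S_{\alpha+1}/S_\alpha=\mathrm{Soc}(R/S_\alpha)$, unions at limits; semiartinian of Loewy length $\sigma+1$ means $S_{\sigma+1}=R\ne S_\sigma$; layers $L_\alpha=S_{\alpha+1}/S_\alpha$. $K^{(\lambda)}$ is the direct sum of $\lambda$ copies of $K$ as a $K$-algebra without unit. $\mathfrak R_K$ is the class of commutative von Neumann regular semiartinian $K$-algebras $R$ of Loewy length $\sigma+1$ such that for each $\alpha\le\sigma$ there is a cardinal $\lambda_\alpha>0$ and a $K$-linear isomorphism of $K$-algebras without unit $L_\alpha\cong K^{(\lambda_\alpha)}$; $\lambda_\sigma$ (finite) is the top layer dimension; $R$ is of countable type if $\sigma$ and all $\lambda_\alpha$ are countable. For a sequence $\mathcal R=(R_i\mid i\in A)$ of $K$-algebras indexed by an infinite set $A$, $R(A,K,\mathcal R)$ is the $K$-subalgebra $\bigoplus_{i\in A}R_i\oplus 1_P\cdot K$ of $P=\prod_{i\in A}R_i$. $\boxplus$ is ring direct product. Define $B_{0,1}=K$; $B_{\beta+1,1}=R(\aleph_0,K,\mathcal R)$ with $\mathcal R$ the constant sequence $R_m=B_{\beta,1}$ ($m<\aleph_0$); for limit $\alpha$, $B_{\alpha,1}=R(\alpha,K,(B_{\beta,1}\mid\beta<\alpha))$;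 and $B_{\alpha,n}=B_{\alpha,1}\boxplus\cdots\boxplus B_{\alpha,1}$ ($n$ copies). *)

theory Defs
  imports "HOL-Algebra.QuotRing" "HOL-Library.Countable_Set"
begin

text \<open>Ordinals are elements of a well-ordered type 'o; the ordinal beta is the
order type of the initial segment below beta.  gamma is the immediate predecessor of beta.\<close>

definition is_pred :: "'o::wellorder \<Rightarrow> 'o \<Rightarrow> bool" where
  "is_pred \<gamma> \<beta> \<longleftrightarrow> \<gamma> < \<beta> \<and> (\<forall>\<delta>. \<gamma> < \<delta> \<longrightarrow> \<beta> \<le> \<delta>)"

definition countable_ord :: "'o::wellorder \<Rightarrow> bool" where
  "countable_ord \<beta> \<longleftrightarrow> countable {\<gamma>. \<gamma> < \<beta>}"

definition kalg :: "('a,'m) ring_scheme \<Rightarrow> ('k::field \<Rightarrow> 'a \<Rightarrow> 'a) \<Rightarrow> bool" where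
  "kalg R sm \<longleftrightarrow> cring R \<and>
     (\<forall>c. \<forall>x\<in>carrier R. sm c x \<in> carrier R) \<and>
     (\<forall>c. \<forall>x\<in>carrier R. \<forall>y\<in>carrier R. sm c (x \<oplus>\<^bsub>R\<^esub> y) = sm c x \<oplus>\<^bsub>R\<^esub> sm c y) \<and>
     (\<forall>c d. \<forall>x\<in>carrier R. sm (c + d) x = sm c x \<oplus>\<^bsub>R\<^esub> sm d x) \<and>
     (\<forall>c d. \<forall>x\<in>carrier R. sm (c * d) x = sm c (sm d x)) \<and>
     (\<forall>x\<in>carrier R. sm 1 x = x) \<and>
     (\<forall>c. \<forall>x\<in>carrier R. \<forall>y\<in>carrier R. sm c (x \<otimes>\<^bsub>R\<^esub> y) = sm c x \<otimes>\<^bsub>R\<^esub> y)"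

definition vn_regular :: "('a,'m) ring_scheme \<Rightarrow> bool" where
  "vn_regular R \<longleftrightarrow> (\<forall>a\<in>carrier R. \<exists>x\<in>carrier R. a = a \<otimes>\<^bsub>R\<^esub> x \<otimes>\<^bsub>R\<^esub> a)"

text \<open>Minimal (nonzero) ideals; the socle of a commutative ring is the sum of its
minimal ideals (= sum of its simple submodules).\<close>
definition min_ideal :: "('a,'m) ring_scheme \<Rightarrow> 'a set \<Rightarrow> bool" where
  "min_ideal Q J \<longleftrightarrow> ideal J Q \<and> J \<noteq> {\<zero>\<^bsub>Q\<^esub>} \<and>
     (\<forall>J'. ideal J' Q \<and> J' \<subseteq> J \<longrightarrow> J' = {\<zero>\<^bsub>Q\<^esub>} \<or> J' = J)"

definition socle :: "('a,'m) ring_scheme \<Rightarrow> 'a set" where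
  "socle Q = genideal Q (\<Union>{J. min_ideal Q J})"

text \<open>Given the ideal I = S_alpha, the ideal S_(alpha+1) with S_(alpha+1)/S_alpha = Soc(R/S_alpha):
the union of the cosets lying in Soc(R/I).\<close>
definition socle_step :: "('a,'m) ring_scheme \<Rightarrow> 'a set \<Rightarrow> 'a set" where
  "socle_step R I = \<Union> (socle (R Quot I))"

definition soc_seq :: "('a,'m) ring_scheme \<Rightarrow> 'o::wellorder \<Rightarrow> 'a set" where
  "soc_seq R = wfrec {(x, y). x < y}
     (\<lambda>rec \<beta>. if \<exists>\<gamma>. \<gamma> < \<beta> then
                 (if \<exists>\<gamma>. is_pred \<gamma> \<beta> then socle_step R (rec (THE \<gamma>. is_pred \<gamma> \<beta>))
                  else \<Union> (rec ` {\<gamma>. \<gamma> < \<beta>}))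
               else {\<zero>\<^bsub>R\<^esub>})"

definition loewy_length_succ :: "('a,'m) ring_scheme \<Rightarrow> 'o::wellorder \<Rightarrow> bool" where
  "loewy_length_succ R \<sigma> \<longleftrightarrow>
     socle_step R (soc_seq R \<sigma>) = carrier R \<and> soc_seq R \<sigma> \<noteq> carrier R"

definition finsupp :: "'i set \<Rightarrow> ('i \<Rightarrow> 'k::zero) set" where
  "finsupp \<Lambda> = {g. finite {i. g i \<noteq> 0} \<and> (\<forall>i. i \<notin> \<Lambda> \<longrightarrow> g i = 0)}"

text \<open>The layer L_beta = S_(beta+1)/S_beta (cosets, with the operations induced by
representatives) is K-linearly isomorphic, as K-algebra without unit, to K^(Lambda).\<close>
definition layer_iso :: "('a,'m) ring_scheme \<Rightarrow> ('k::field \<Rightarrow> 'a \<Rightarrow> 'a) \<Rightarrow> 'o::wellorder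
                          \<Rightarrow> 'a set \<Rightarrow> bool" where
  "layer_iso R sm \<beta> \<Lambda> \<longleftrightarrow>
    (let S = soc_seq R \<beta>; T = socle_step R S; L = (\<lambda>x. S +>\<^bsub>R\<^esub> x) ` T in
     \<exists>\<phi> :: 'a set \<Rightarrow> ('a \<Rightarrow> 'k).
       bij_betw \<phi> L (finsupp \<Lambda>) \<and>
       (\<forall>x\<in>T. \<forall>y\<in>T. \<phi> (S +>\<^bsub>R\<^esub> (x \<oplus>\<^bsub>R\<^esub> y)) = (\<lambda>i. \<phi> (S +>\<^bsub>R\<^esub> x) i + \<phi> (S +>\<^bsub>R\<^esub> y) i)) \<and>
       (\<forall>x\<in>T. \<forall>y\<in>T. \<phi> (S +>\<^bsub>R\<^esub> (x \<otimes>\<^bsub>R\<^esub> y)) = (\<lambda>i. \<phi> (S +>\<^bsub>R\<^esub> x) i * \<phi> (S +>\<^bsub>R\<^esub> y) i)) \<and>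
       (\<forall>c. \<forall>x\<in>T. \<phi> (S +>\<^bsub>R\<^esub> (sm c x)) = (\<lambda>i. c * \<phi> (S +>\<^bsub>R\<^esub> x) i)))"

definition in_RK :: "('a,'m) ring_scheme \<Rightarrow> ('k::field \<Rightarrow> 'a \<Rightarrow> 'a) \<Rightarrow> 'o::wellorder \<Rightarrow> bool" where
  "in_RK R sm \<sigma> \<longleftrightarrow> kalg R sm \<and> vn_regular R \<and> loewy_length_succ R \<sigma> \<and>
     (\<forall>\<beta>\<le>\<sigma>. \<exists>\<Lambda>. \<Lambda> \<noteq> {} \<and> layer_iso R sm \<beta> \<Lambda>)"

definition top_layer_dim :: "('a,'m) ring_scheme \<Rightarrow> ('k::field \<Rightarrow> 'a \<Rightarrow> 'a) \<Rightarrow> 'o::wellorder \<Rightarrow> nat \<Rightarrow> bool" where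
  "top_layer_dim R sm \<sigma> n \<longleftrightarrow> (\<exists>\<Lambda>. finite \<Lambda> \<and> card \<Lambda> = n \<and> layer_iso R sm \<sigma> \<Lambda>)"

definition countable_type :: "('a,'m) ring_scheme \<Rightarrow> ('k::field \<Rightarrow> 'a \<Rightarrow> 'a) \<Rightarrow> 'o::wellorder \<Rightarrow> bool" where
  "countable_type R sm \<sigma> \<longleftrightarrow> countable_ord \<sigma> \<and>
     (\<forall>\<beta>\<le>\<sigma>. \<exists>\<Lambda>. countable \<Lambda> \<and> \<Lambda> \<noteq> {} \<and> layer_iso R sm \<beta> \<Lambda>)"

text \<open>Concrete model: an algebra is a set of K-valued functions on a set of "points"
(lists of indices), vanishing off the points, with pointwise operations.  The product
of algebras (R_i) is realized on the points i#p, p a point of R_i.\<close>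

type_synonym 'o pt = "(nat + 'o) list"
type_synonym ('o,'k) falg = "'o pt set \<times> ('o pt \<Rightarrow> 'k) set"

text \<open>R(A,K,(R_i)) = (direct sum of R_i) + K 1_P inside the product P.\<close>
definition Rcons :: "(nat + 'o) set \<Rightarrow> ((nat + 'o) \<Rightarrow> ('o,'k::field) falg) \<Rightarrow> ('o,'k) falg" where
  "Rcons A Rs =
    ({i # p | i p. i \<in> A \<and> p \<in> fst (Rs i)},
     {f. \<exists>c F. finite F \<and> F \<subseteq> A \<and>
          (\<forall>i\<in>A. (\<lambda>p. f (i # p)) \<in> snd (Rs i) \<and>
                  (i \<notin> F \<longrightarrow> (\<forall>p. f (i # p) = (if p \<in> fst (Rs i) then c else 0)))) \<and>
          (\<forall>q. q \<notin> {i # p | i p. i \<in> A \<and> p \<in> fst (Rs i)} \<longrightarrow> f q = 0)})"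

definition Balg1 :: "'o::wellorder \<Rightarrow> ('o,'k::field) falg" where
  "Balg1 = wfrec {(x, y). x < y}
     (\<lambda>rec \<alpha>. if \<not> (\<exists>\<gamma>. \<gamma> < \<alpha>) then ({[]}, {(\<lambda>p. if p = [] then c else 0) | c. True})
             else if \<exists>\<gamma>. is_pred \<gamma> \<alpha> then Rcons (range Inl) (\<lambda>i. rec (THE \<gamma>. is_pred \<gamma> \<alpha>))
             else Rcons (Inr ` {\<beta>. \<beta> < \<alpha>}) (\<lambda>i. rec (projr i)))"

definition Balgn :: "'o::wellorder \<Rightarrow> nat \<Rightarrow> ('o,'k::field) falg" where
  "Balgn \<alpha> n = (let B = (Balg1 \<alpha> :: ('o,'k) falg) in
    ({Inl k # p | k p. k < n \<and> p \<in> fst B},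
     {f. (\<forall>k<n. (\<lambda>p. f (Inl k # p)) \<in> snd B) \<and>
         (\<forall>q. q \<notin> {Inl k # p | k p. k < n \<and> p \<in> fst B} \<longrightarrow> f q = 0)}))"

definition falg_ring :: "('o,'k::field) falg \<Rightarrow> ('o pt \<Rightarrow> 'k) ring" where
  "falg_ring A = \<lparr>carrier = snd A, mult = (\<lambda>f g p. f p * g p),
                  one = (\<lambda>p. if p \<in> fst A then 1 else 0),
                  zero = (\<lambda>p. 0), add = (\<lambda>f g p. f p + g p)\<rparr>"

definition falg_smult :: "'k::field \<Rightarrow> ('o pt \<Rightarrow> 'k) \<Rightarrow> ('o pt \<Rightarrow> 'k)" where
  "falg_smult c f = (\<lambda>p. c * f p)"

definition B_ring :: "'o::wellorder \<Rightarrow> nat \<Rightarrow> ('o pt \<Rightarrow> 'k::field) ring" where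
  "B_ring \<alpha> n = falg_ring (Balgn \<alpha> n)"

end

theory Submission
  imports Defs
begin

text \<open>\<open>B\<^sub>\<alpha>\<^sub>,\<^sub>n\<close> is realised as an algebra of functions on the leaves of a forest of \<open>n\<close>
  well-founded trees of rank \<open>\<alpha>\<close>; its elements extend to locally constant functions on the
  scattered space of all nodes. The socle sequence is \<open>S\<^sub>\<gamma> = {x. x vanishes near every node of
  rank \<ge> \<gamma>}\<close>. Modulo \<open>S\<^sub>\<gamma>\<close>, the indicator \<open>e\<^sub>q\<close> of the leaves below a node \<open>q\<close> of rank \<open>\<gamma>\<close>
  satisfies \<open>e\<^sub>q x \<equiv> x(q) e\<^sub>q\<close>, so it spans a minimal ideal, and these indicators span the functions
  vanishing near every node of rank \<open>> \<gamma>\<close>; any other function is split by such an indicator into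
  two parts outside \<open>S\<^sub>\<gamma>\<close>, so it does not lie in the socle of \<open>B/S\<^sub>\<gamma>\<close>. At a limit \<open>\<gamma>\<close> the union
  works because near each node only finitely many children deviate. Hence \<open>S\<^sub>\<gamma>\<^sub>+\<^sub>1/S\<^sub>\<gamma>\<close> has the
  nodes of rank \<open>\<gamma>\<close> as a basis of orthogonal idempotents: they exist for every \<open>\<gamma> \<le> \<alpha>\<close>, are
  countably many when \<open>\<alpha>\<close> is countable, and the \<open>n\<close> roots are the only nodes of rank \<open>\<alpha>\<close>.\<close>

section \<open>Ordinals\<close>

lemma is_pred_unique: "is_pred a b \<Longrightarrow> is_pred c b \<Longrightarrow> a = c"
  unfolding is_pred_def by (metis leD linorder_neqE)

lemma The_is_pred: "is_pred a b \<Longrightarrow> (THE g. is_pred g b) = a"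
  using is_pred_unique by blast

lemma is_pred_le_iff_less: "is_pred d g \<Longrightarrow> (g \<le> b) = (d < b)"
  unfolding is_pred_def by (auto intro: less_le_trans)

lemma is_pred_less_imp_le: "is_pred p b \<Longrightarrow> g < b \<Longrightarrow> g \<le> p"
  unfolding is_pred_def by (meson not_le)

lemma limit_dense:
  assumes "\<not> (\<exists>p. is_pred p l)" and "\<rho> < l"
  shows "\<exists>\<delta>. \<rho> < \<delta> \<and> \<delta> < l"
  using assms unfolding is_pred_def by (meson not_le)

lemma limit_infinite_interval:
  assumes "\<not> (\<exists>p. is_pred p b)" and "(g::'o::wellorder) < b"
  shows "infinite {d. g \<le> d \<and> d < b}"
proof
  assume fin: "finite {d. g \<le> d \<and> d < b}"
  define m where "m = Max {d. g \<le> d \<and> d < b}"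
  have m: "g \<le> m" "m < b"
    using Max_in[OF fin] assms(2) unfolding m_def by auto
  obtain \<delta> where "m < \<delta>" "\<delta> < b" using limit_dense[OF assms(1) m(2)] by blast
  then have "\<delta> \<le> m" using fin m unfolding m_def by (intro Max_ge) auto
  then show False using \<open>m < \<delta>\<close> by simp
qed

definition zero_ord :: "'o::wellorder \<Rightarrow> bool" where
  "zero_ord b \<longleftrightarrow> \<not> (\<exists>g. g < b)"

lemma zero_ord_Least: "zero_ord (LEAST x::'o::wellorder. True)"
  unfolding zero_ord_def by (auto simp: not_less intro: Least_le)

lemma Least_less_nonzero: "\<not> zero_ord b \<Longrightarrow> (LEAST x::'o::wellorder. True) < b"
  unfolding zero_ord_def by (auto intro: Least_le le_less_trans)

lemma finite_bound_below_nonzero: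
  assumes "\<not> zero_ord (l::'o::wellorder)" "finite D" "\<And>d. d \<in> D \<Longrightarrow> d < l"
  shows "\<exists>\<delta><l. \<forall>d\<in>D. d \<le> \<delta>"
proof -
  obtain \<delta>0 where "\<delta>0 < l" using assms(1) unfolding zero_ord_def by blast
  then show ?thesis
    using assms(2,3) Max_in[of "insert \<delta>0 D"] Max_ge[of "insert \<delta>0 D"]
    by (intro exI[of _ "Max (insert \<delta>0 D)"]) auto
qed

section \<open>Socle layers of commutative algebras\<close>

lemma soc_seq_unfold: "soc_seq R (\<beta>::'o::wellorder) =
  (if \<exists>\<gamma>. \<gamma> < \<beta> then
     (if \<exists>\<gamma>. is_pred \<gamma> \<beta> then socle_step R (soc_seq R (THE \<gamma>. is_pred \<gamma> \<beta>))
      else \<Union> (soc_seq R ` {\<gamma>. \<gamma> < \<beta>}))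
   else {\<zero>\<^bsub>R\<^esub>})"
proof -
  have "is_pred g \<beta> \<Longrightarrow> (THE \<gamma>. is_pred \<gamma> \<beta>) < \<beta>" for g
    using The_is_pred[of g \<beta>] by (simp add: is_pred_def)
  moreover have "cut (soc_seq R) {(x, y). x < y} \<beta> ` {\<gamma>. \<gamma> < \<beta>} = soc_seq R ` {\<gamma>. \<gamma> < \<beta>}"
    by (auto simp: cut_def image_def)
  ultimately show ?thesis
    by (subst soc_seq_def, subst wfrec[OF wf], fold soc_seq_def) (auto simp: cut_def)
qed

lemma (in cring) Union_min_ideals_subset: "\<Union>{J. min_ideal R J} \<subseteq> carrier R"
  unfolding min_ideal_def using ideal.axioms(1) additive_subgroup.a_subset by blast

lemma (in cring) socle_ideal: "ideal (socle R) R"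
  unfolding socle_def using Union_min_ideals_subset by (rule genideal_ideal)

lemma (in cring) min_ideal_subset_socle: "min_ideal R J \<Longrightarrow> J \<subseteq> socle R"
  unfolding socle_def using genideal_self[OF Union_min_ideals_subset] by blast

lemma (in cring) socle_subset_ideal:
  "ideal J R \<Longrightarrow> (\<And>M. min_ideal R M \<Longrightarrow> M \<subseteq> J) \<Longrightarrow> socle R \<subseteq> J"
  unfolding socle_def by (rule genideal_minimal) blast+

lemma ideal_zero_mem: "ideal J R \<Longrightarrow> \<zero>\<^bsub>R\<^esub> \<in> J"
  using additive_subgroup.zero_closed ideal.axioms(1) by blast

lemma (in ring) ideal_finsum_closed:
  assumes "ideal J R" "finite G" "\<And>e. e \<in> G \<Longrightarrow> f e \<in> J"
  shows "finsum R f G \<in> J"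
  using assms(2,3)
proof (induction G rule: finite_induct)
  case empty
  then show ?case using assms(1) by (simp add: ideal_zero_mem)
next
  case (insert a G)
  interpret J: ideal J R by fact
  have "f \<in> G \<rightarrow> carrier R" "f a \<in> carrier R" using insert J.a_subset by auto
  then show ?case using insert by (simp add: finsum_insert J.a_closed)
qed

lemma finsupp_add:
  "g \<in> finsupp \<Lambda> \<Longrightarrow> g' \<in> finsupp \<Lambda> \<Longrightarrow> (\<lambda>i. g i + g' i :: 'k::monoid_add) \<in> finsupp \<Lambda>"
  unfolding finsupp_def by (auto intro: rev_finite_subset[of "{i. g i \<noteq> 0} \<union> {i. g' i \<noteq> 0}"])

lemma finsupp_diff:
  "g \<in> finsupp \<Lambda> \<Longrightarrow> g' \<in> finsupp \<Lambda> \<Longrightarrow> (\<lambda>i. g i - g' i :: 'k::group_add) \<in> finsupp \<Lambda>"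
  unfolding finsupp_def by (auto intro: rev_finite_subset[of "{i. g i \<noteq> 0} \<union> {i. g' i \<noteq> 0}"])

lemma finsupp_mult:
  "g \<in> finsupp \<Lambda> \<Longrightarrow> (\<lambda>i. g i * g' i :: 'k::mult_zero) \<in> finsupp \<Lambda>"
  unfolding finsupp_def by (auto intro: rev_finite_subset[of "{i. g i \<noteq> 0}"])

lemma finsupp_smult: "g \<in> finsupp \<Lambda> \<Longrightarrow> (\<lambda>i. c * g i :: 'k::mult_zero) \<in> finsupp \<Lambda>"
  unfolding finsupp_def by (auto intro: rev_finite_subset[of "{i. g i \<noteq> 0}"])

locale kalg_ideal = ideal I R + cring R for I and R (structure) +
  fixes sm :: "'k::field \<Rightarrow> 'a \<Rightarrow> 'a"
  assumes kalg: "kalg R sm"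
begin

lemma smult_closed: "x \<in> carrier R \<Longrightarrow> sm c x \<in> carrier R"
  using kalg unfolding kalg_def by blast

lemma smult_eq_mult: "x \<in> carrier R \<Longrightarrow> sm c x = sm c \<one> \<otimes> x"
  using kalg unfolding kalg_def by (metis one_closed l_one)

lemma smult_smult: "x \<in> carrier R \<Longrightarrow> sm c (sm d x) = sm (c * d) x"
  using kalg unfolding kalg_def by simp

lemma smult_one: "x \<in> carrier R \<Longrightarrow> sm 1 x = x"
  using kalg unfolding kalg_def by simp

lemma smult_zero: "x \<in> carrier R \<Longrightarrow> sm 0 x = \<zero>"
proof -
  assume x: "x \<in> carrier R"
  have "sm 0 x \<oplus> sm 0 x = sm 0 x \<oplus> \<zero>"
    using kalg x smult_closed[OF x] unfolding kalg_def by (metis add_0_left r_zero)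
  then show ?thesis using smult_closed[OF x] by (metis add.l_cancel_one' zero_closed r_zero add.m_comm)
qed

lemma ideal_smult_closed: "ideal J R \<Longrightarrow> x \<in> J \<Longrightarrow> sm c x \<in> J"
  using smult_eq_mult ideal.I_l_closed ideal.Icarr smult_closed one_closed by metis

lemma quot_carrier: "carrier (R Quot I) = (+>) I ` carrier R"
  unfolding FactRing_def by (auto simp: A_RCOSETS_def RCOSETS_def a_r_coset_def)

lemma quot_zero: "\<zero>\<^bsub>R Quot I\<^esub> = I"
  unfolding FactRing_def by simp

lemma rcos_zero: "I +> \<zero> = I"
  using a_rcos_const ideal_zero_mem[OF is_ideal] by blast

lemma rcos_eq_zero_iff: "x \<in> carrier R \<Longrightarrow> (I +> x = I) \<longleftrightarrow> x \<in> I"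
  using a_rcos_const a_rcos_self by blast

lemma rcos_eq_iff: "x \<in> carrier R \<Longrightarrow> y \<in> carrier R \<Longrightarrow> (I +> x = I +> y) \<longleftrightarrow> x \<ominus> y \<in> I"
  using a_rcos_module_minus[OF ring_axioms] a_repr_independence' a_repr_independenceD by metis

lemma min_ideal_idempotent_split:
  assumes M: "min_ideal (R Quot I) M" and x: "x \<in> carrier R" "I +> x \<in> M"
    and z: "z \<in> carrier R" "z \<otimes> z = z"
  shows "x \<otimes> z \<in> I \<or> x \<otimes> (\<one> \<ominus> z) \<in> I"
proof -
  let ?Q = "R Quot I"
  interpret Q: cring ?Q by (rule quotient_is_cring) (rule is_cring)
  interpret M: ideal M ?Q using M unfolding min_ideal_def by blast
  interpret h: ring_hom_ring R ?Q "(+>) I" by (rule rcos_ring_hom_ring)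
  have "x \<otimes> (\<one> \<ominus> z) \<in> I" if xz: "x \<otimes> z \<notin> I"
  proof -
    have xzc: "x \<otimes> z \<in> carrier R" using x z by simp
    let ?P = "PIdl\<^bsub>?Q\<^esub> (I +> (x \<otimes> z))"
    have "I +> (x \<otimes> z) \<in> M" using x z M.I_r_closed by simp
    then have "?P \<subseteq> M" by (rule Q.cgenideal_minimal[OF M.is_ideal])
    moreover have "?P \<noteq> {\<zero>\<^bsub>?Q\<^esub>}"
      using Q.cgenideal_self[of "I +> (x \<otimes> z)"] xzc xz rcos_eq_zero_iff quot_zero by auto
    moreover have "ideal ?P ?Q" using xzc by (intro Q.cgenideal_ideal) simp
    ultimately have "?P = M" using M unfolding min_ideal_def by blast
    then have "I +> x \<in> ?P" using x(2) by simp
    then obtain y where y: "y \<in> carrier ?Q" "I +> x = y \<otimes>\<^bsub>?Q\<^esub> (I +> (x \<otimes> z))"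
      unfolding cgenideal_def by blast
    then obtain r where r: "r \<in> carrier R" "y = I +> r" using quot_carrier by blast
    have "I +> (x \<otimes> (\<one> \<ominus> z)) = (I +> x) \<otimes>\<^bsub>?Q\<^esub> (I +> (\<one> \<ominus> z))" using x z by simp
    also have "\<dots> = I +> ((r \<otimes> (x \<otimes> z)) \<otimes> (\<one> \<ominus> z))" using y r x z by simp
    also have "(r \<otimes> (x \<otimes> z)) \<otimes> (\<one> \<ominus> z) = (r \<otimes> x) \<otimes> (z \<ominus> z \<otimes> z)"
      using r x z by algebra
    also have "\<dots> = \<zero>" using z r x by (simp add: r_neg minus_eq)
    finally show ?thesis using rcos_eq_zero_iff[of "x \<otimes> (\<one> \<ominus> z)"] x z rcos_zero by simp
  qed
  then show ?thesis by blast
qed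

text \<open>The ideal generated by \<open>I +> e\<close> is one-dimensional, hence minimal.\<close>

lemma min_ideal_PIdl:
  assumes e: "e \<in> carrier R" "e \<notin> I"
    and scalar: "\<And>x. x \<in> carrier R \<Longrightarrow> \<exists>c. e \<otimes> x \<ominus> sm c e \<in> I"
  shows "min_ideal (R Quot I) (PIdl\<^bsub>R Quot I\<^esub> (I +> e))"
  unfolding min_ideal_def
proof (intro conjI allI impI)
  let ?Q = "R Quot I"
  interpret Q: cring ?Q by (rule quotient_is_cring) (rule is_cring)
  interpret h: ring_hom_ring R ?Q "(+>) I" by (rule rcos_ring_hom_ring)
  have he: "I +> e \<in> carrier ?Q" using e by simp
  show "ideal (PIdl\<^bsub>?Q\<^esub> (I +> e)) ?Q" using he by (rule Q.cgenideal_ideal)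
  show "PIdl\<^bsub>?Q\<^esub> (I +> e) \<noteq> {\<zero>\<^bsub>?Q\<^esub>}"
    using Q.cgenideal_self[OF he] e rcos_eq_zero_iff quot_zero by auto
  fix J assume J: "ideal J ?Q \<and> J \<subseteq> PIdl\<^bsub>?Q\<^esub> (I +> e)"
  interpret J: ideal J ?Q using J by blast
  show "J = {\<zero>\<^bsub>?Q\<^esub>} \<or> J = PIdl\<^bsub>?Q\<^esub> (I +> e)"
  proof (cases "J = {\<zero>\<^bsub>?Q\<^esub>}")
    case False
    then obtain j where j: "j \<in> J" "j \<noteq> \<zero>\<^bsub>?Q\<^esub>" using J.zero_closed by blast
    then have "j \<in> PIdl\<^bsub>?Q\<^esub> (I +> e)" using J by blast
    then obtain y where y: "y \<in> carrier ?Q" "j = y \<otimes>\<^bsub>?Q\<^esub> (I +> e)" unfolding cgenideal_def by blast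
    then obtain r where r: "r \<in> carrier R" "y = I +> r" using quot_carrier by blast
    obtain c where c: "e \<otimes> r \<ominus> sm c e \<in> I" using scalar r(1) by blast
    have "j = I +> (r \<otimes> e)" using y r e by simp
    also have "\<dots> = I +> (e \<otimes> r)" using m_comm[OF r(1) e(1)] by simp
    also have "\<dots> = I +> sm c e" using rcos_eq_iff[of "e \<otimes> r" "sm c e"] c r e smult_closed by simp
    finally have jc: "j = I +> sm c e" .
    have "c \<noteq> 0"
    proof
      assume "c = 0"
      then have "j = I" using jc smult_zero[OF e(1)] rcos_zero by simp
      then show False using j(2) quot_zero by simp
    qed
    then have "e = sm (inverse c) (sm c e)" using e(1) by (simp add: smult_smult smult_one)
    also have "\<dots> = sm (inverse c) \<one> \<otimes> sm c e" using e(1) smult_closed by (intro smult_eq_mult)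
    finally have "I +> e = (I +> sm (inverse c) \<one>) \<otimes>\<^bsub>?Q\<^esub> j"
      using jc e(1) smult_closed one_closed by (metis h.hom_mult)
    then have "I +> e \<in> J" using J.I_l_closed[OF j(1)] smult_closed one_closed by simp
    then have "J = PIdl\<^bsub>?Q\<^esub> (I +> e)"
      using Q.cgenideal_minimal[OF J.is_ideal] J by blast
    then show ?thesis ..
  qed simp
qed

lemma socle_quot_subset_image:
  assumes T: "ideal T R"
    and split: "\<And>x. x \<in> carrier R \<Longrightarrow> x \<notin> T \<Longrightarrow>
                  \<exists>z\<in>carrier R. z \<otimes> z = z \<and> x \<otimes> z \<notin> I \<and> x \<otimes> (\<one> \<ominus> z) \<notin> I"
  shows "socle (R Quot I) \<subseteq> (+>) I ` T"
proof (rule cring.socle_subset_ideal)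
  show "cring (R Quot I)" by (rule quotient_is_cring) (rule is_cring)
  show "ideal ((+>) I ` T) (R Quot I)" by (rule ring_ideal_imp_quot_ideal) (rule is_ideal, rule T)
  fix M assume M: "min_ideal (R Quot I) M"
  show "M \<subseteq> (+>) I ` T"
  proof
    fix m assume m: "m \<in> M"
    have "ideal M (R Quot I)" using M unfolding min_ideal_def by blast
    then have "m \<in> carrier (R Quot I)" using m by (rule ideal.Icarr)
    then obtain x where x: "x \<in> carrier R" "m = I +> x" unfolding quot_carrier by blast
    then have xM: "I +> x \<in> M" using m by simp
    have "x \<in> T"
    proof (rule ccontr)
      assume "x \<notin> T"
      then obtain z where z: "z \<in> carrier R" "z \<otimes> z = z" "x \<otimes> z \<notin> I" "x \<otimes> (\<one> \<ominus> z) \<notin> I"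
        using split[OF x(1)] by blast
      show False using min_ideal_idempotent_split[OF M x(1) xM z(1,2)] z(3,4) by blast
    qed
    then show "m \<in> (+>) I ` T" using x(2) by (rule rev_image_eqI)
  qed
qed

lemma subset_socle_quot_preimage:
  assumes T: "T \<subseteq> carrier R" and basis: "\<Lambda> \<subseteq> carrier R"
    and nonzero: "\<And>e. e \<in> \<Lambda> \<Longrightarrow> e \<notin> I"
    and scalar: "\<And>e x. e \<in> \<Lambda> \<Longrightarrow> x \<in> carrier R \<Longrightarrow> \<exists>c. e \<otimes> x \<ominus> sm c e \<in> I"
    and span: "\<And>x. x \<in> T \<Longrightarrow> \<exists>G c. finite G \<and> G \<subseteq> \<Lambda> \<and> x \<ominus> finsum R (\<lambda>e. sm (c e) e) G \<in> I"
  shows "T \<subseteq> {x \<in> carrier R. I +> x \<in> socle (R Quot I)}"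
proof -
  let ?Q = "R Quot I"
  define J where "J = {x \<in> carrier R. I +> x \<in> socle ?Q}"
  interpret Q: cring ?Q by (rule quotient_is_cring) (rule is_cring)
  interpret h: ring_hom_ring R ?Q "(+>) I" by (rule rcos_ring_hom_ring)
  interpret J: ideal J R unfolding J_def by (rule h.ideal_vimage) (rule Q.socle_ideal)
  have IJ: "I \<subseteq> J"
  proof
    fix i assume "i \<in> I"
    then have "I +> i = \<zero>\<^bsub>?Q\<^esub>" by (simp add: a_rcos_const quot_zero)
    then show "i \<in> J" unfolding J_def using ideal_zero_mem[OF Q.socle_ideal] \<open>i \<in> I\<close> by simp
  qed
  have "e \<in> J" if e: "e \<in> \<Lambda>" for e
  proof -
    have ec: "e \<in> carrier R" using e basis by blast
    have "PIdl\<^bsub>?Q\<^esub> (I +> e) \<subseteq> socle ?Q"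
      by (rule Q.min_ideal_subset_socle, rule min_ideal_PIdl[OF ec nonzero[OF e] scalar[OF e]])
    then show ?thesis unfolding J_def using Q.cgenideal_self[of "I +> e"] ec by auto
  qed
  then have sum_in: "finsum R (\<lambda>e. sm (c e) e) G \<in> J" if "finite G" "G \<subseteq> \<Lambda>" for G c
    using that ideal_smult_closed[OF J.is_ideal] by (intro ideal_finsum_closed[OF J.is_ideal]) auto
  have "T \<subseteq> J"
  proof
    fix x assume x: "x \<in> T"
    then obtain G c where G: "finite G" "G \<subseteq> \<Lambda>" "x \<ominus> finsum R (\<lambda>e. sm (c e) e) G \<in> I"
      using span by blast
    define s where "s = finsum R (\<lambda>e. sm (c e) e) G"
    have "s \<in> J" unfolding s_def using sum_in G by blast
    moreover have "x \<ominus> s \<in> J" using G(3) IJ unfolding s_def by blast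
    moreover have "x \<in> carrier R" using x T by blast
    then have "x = (x \<ominus> s) \<oplus> s" using J.Icarr[OF \<open>s \<in> J\<close>] by algebra
    ultimately show "x \<in> J" using J.a_closed by metis
  qed
  then show ?thesis unfolding J_def .
qed

lemma socle_step_eqI:
  assumes T: "ideal T R" "I \<subseteq> T" and basis: "\<Lambda> \<subseteq> T"
    and nonzero: "\<And>e. e \<in> \<Lambda> \<Longrightarrow> e \<notin> I"
    and scalar: "\<And>e x. e \<in> \<Lambda> \<Longrightarrow> x \<in> carrier R \<Longrightarrow> \<exists>c. e \<otimes> x \<ominus> sm c e \<in> I"
    and span: "\<And>x. x \<in> T \<Longrightarrow> \<exists>G c. finite G \<and> G \<subseteq> \<Lambda> \<and> x \<ominus> finsum R (\<lambda>e. sm (c e) e) G \<in> I"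
    and split: "\<And>x. x \<in> carrier R \<Longrightarrow> x \<notin> T \<Longrightarrow>
                  \<exists>z\<in>carrier R. z \<otimes> z = z \<and> x \<otimes> z \<notin> I \<and> x \<otimes> (\<one> \<ominus> z) \<notin> I"
  shows "socle_step R I = T"
proof -
  interpret T: ideal T R by (rule T(1))
  have "socle (R Quot I) \<subseteq> (+>) I ` T" by (rule socle_quot_subset_image[OF T(1) split])
  moreover have "T \<subseteq> {x \<in> carrier R. I +> x \<in> socle (R Quot I)}"
    by (rule subset_socle_quot_preimage[OF T.a_subset _ nonzero scalar span]) (use basis T.a_subset in blast)
  ultimately have "socle (R Quot I) = (+>) I ` T" by blast
  moreover have "\<Union> ((+>) I ` T) = T"
  proof
    show "\<Union> ((+>) I ` T) \<subseteq> T"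
    proof
      fix y assume "y \<in> \<Union> ((+>) I ` T)"
      then obtain x i where "x \<in> T" "i \<in> I" "y = i \<oplus> x" unfolding a_r_coset_def r_coset_def by auto
      then show "y \<in> T" using T(2) T.a_closed by blast
    qed
    show "T \<subseteq> \<Union> ((+>) I ` T)" using a_rcos_self T.Icarr by blast
  qed
  ultimately show ?thesis unfolding socle_step_def by simp
qed

lemma congruent_add:
  "x \<ominus> a \<in> I \<Longrightarrow> y \<ominus> b \<in> I \<Longrightarrow> x \<in> carrier R \<Longrightarrow> y \<in> carrier R \<Longrightarrow> a \<in> carrier R \<Longrightarrow> b \<in> carrier R \<Longrightarrow>
    (x \<oplus> y) \<ominus> (a \<oplus> b) \<in> I"
proof -
  assume "x \<ominus> a \<in> I" "y \<ominus> b \<in> I" and c: "x \<in> carrier R" "y \<in> carrier R" "a \<in> carrier R" "b \<in> carrier R"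
  moreover have "(x \<oplus> y) \<ominus> (a \<oplus> b) = (x \<ominus> a) \<oplus> (y \<ominus> b)" using c by algebra
  ultimately show ?thesis using additive_subgroup.a_closed[OF is_additive_subgroup] by simp
qed

lemma congruent_mult:
  "x \<ominus> a \<in> I \<Longrightarrow> y \<ominus> b \<in> I \<Longrightarrow> x \<in> carrier R \<Longrightarrow> y \<in> carrier R \<Longrightarrow> a \<in> carrier R \<Longrightarrow> b \<in> carrier R \<Longrightarrow>
    x \<otimes> y \<ominus> a \<otimes> b \<in> I"
proof -
  assume "x \<ominus> a \<in> I" "y \<ominus> b \<in> I" and c: "x \<in> carrier R" "y \<in> carrier R" "a \<in> carrier R" "b \<in> carrier R"
  moreover have "x \<otimes> y \<ominus> a \<otimes> b = (x \<ominus> a) \<otimes> y \<oplus> a \<otimes> (y \<ominus> b)" using c by algebra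
  ultimately show ?thesis
    using additive_subgroup.a_closed[OF is_additive_subgroup] I_r_closed I_l_closed by simp
qed

lemma congruent_smult: "x \<ominus> a \<in> I \<Longrightarrow> x \<in> carrier R \<Longrightarrow> a \<in> carrier R \<Longrightarrow> sm c x \<ominus> sm c a \<in> I"
proof -
  assume "x \<ominus> a \<in> I" and c: "x \<in> carrier R" "a \<in> carrier R"
  have "sm c x \<ominus> sm c a = sm c \<one> \<otimes> x \<ominus> sm c \<one> \<otimes> a" using c by (simp only: smult_eq_mult)
  also have "\<dots> = sm c \<one> \<otimes> (x \<ominus> a)" using c smult_closed[OF one_closed] by algebra
  finally show ?thesis using \<open>x \<ominus> a \<in> I\<close> smult_closed[OF one_closed] by (simp add: I_l_closed)
qed

lemma layer_isoI:
  fixes L :: "('a \<Rightarrow> 'k) \<Rightarrow> 'a" and \<beta> :: "'o::wellorder"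
  assumes seq: "soc_seq R \<beta> = I" and step: "socle_step R I = T" and T: "ideal T R"
    and L_in: "\<And>g. g \<in> finsupp \<Lambda> \<Longrightarrow> L g \<in> T"
    and L_onto: "\<And>x. x \<in> T \<Longrightarrow> \<exists>g\<in>finsupp \<Lambda>. x \<ominus> L g \<in> I"
    and L_inj: "\<And>g g'. g \<in> finsupp \<Lambda> \<Longrightarrow> g' \<in> finsupp \<Lambda> \<Longrightarrow> L g \<ominus> L g' \<in> I \<Longrightarrow> g = g'"
    and L_add: "\<And>g g'. g \<in> finsupp \<Lambda> \<Longrightarrow> g' \<in> finsupp \<Lambda> \<Longrightarrow> L (\<lambda>i. g i + g' i) = L g \<oplus> L g'"
    and L_mult: "\<And>g g'. g \<in> finsupp \<Lambda> \<Longrightarrow> g' \<in> finsupp \<Lambda> \<Longrightarrow> L (\<lambda>i. g i * g' i) = L g \<otimes> L g'"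
    and L_smult: "\<And>g c. g \<in> finsupp \<Lambda> \<Longrightarrow> L (\<lambda>i. c * g i) = sm c (L g)"
  shows "layer_iso R sm \<beta> \<Lambda>"
proof -
  interpret T: ideal T R by (rule T)
  have Lc: "L g \<in> carrier R" if "g \<in> finsupp \<Lambda>" for g using L_in[OF that] T.Icarr by blast
  define E where "E g = I +> L g" for g
  define \<phi> where "\<phi> = the_inv_into (finsupp \<Lambda>) E"
  have inj: "inj_on E (finsupp \<Lambda>)"
    by (rule inj_onI) (use L_inj Lc rcos_eq_iff in \<open>auto simp: E_def\<close>)
  have "E ` finsupp \<Lambda> = (+>) I ` T"
  proof
    show "E ` finsupp \<Lambda> \<subseteq> (+>) I ` T" using L_in unfolding E_def by blast
    show "(+>) I ` T \<subseteq> E ` finsupp \<Lambda>"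
    proof
      fix C assume "C \<in> (+>) I ` T"
      then obtain x where x: "x \<in> T" "C = I +> x" by blast
      then obtain g where "g \<in> finsupp \<Lambda>" "x \<ominus> L g \<in> I" using L_onto by blast
      then show "C \<in> E ` finsupp \<Lambda>" using x rcos_eq_iff Lc T.Icarr unfolding E_def by blast
    qed
  qed
  then have bij: "bij_betw \<phi> ((+>) I ` T) (finsupp \<Lambda>)"
    unfolding \<phi>_def using inj by (intro bij_betw_the_inv_into) (simp add: bij_betw_def)
  have \<phi>_rcos: "\<phi> (I +> x) = g" if "x \<in> T" "g \<in> finsupp \<Lambda>" "x \<ominus> L g \<in> I" for x g
  proof -
    have "I +> x = E g" unfolding E_def using that rcos_eq_iff Lc T.Icarr by blast
    then show ?thesis unfolding \<phi>_def using inj that(2) by (simp add: the_inv_into_f_f)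
  qed
  have "\<phi> (I +> (x \<oplus> y)) = (\<lambda>i. \<phi> (I +> x) i + \<phi> (I +> y) i) \<and>
        \<phi> (I +> (x \<otimes> y)) = (\<lambda>i. \<phi> (I +> x) i * \<phi> (I +> y) i) \<and>
        \<phi> (I +> sm c x) = (\<lambda>i. c * \<phi> (I +> x) i)" if x: "x \<in> T" and y: "y \<in> T" for x y c
  proof -
    obtain g where g: "g \<in> finsupp \<Lambda>" "x \<ominus> L g \<in> I" using L_onto x by blast
    obtain g' where g': "g' \<in> finsupp \<Lambda>" "y \<ominus> L g' \<in> I" using L_onto y by blast
    note c = T.Icarr[OF x] T.Icarr[OF y] Lc[OF g(1)] Lc[OF g'(1)]
    have "\<phi> (I +> (x \<oplus> y)) = (\<lambda>i. g i + g' i)"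
      using congruent_add[OF g(2) g'(2) c] g(1) g'(1) x y
      by (intro \<phi>_rcos finsupp_add T.a_closed) (simp_all add: L_add)
    moreover have "\<phi> (I +> (x \<otimes> y)) = (\<lambda>i. g i * g' i)"
      using congruent_mult[OF g(2) g'(2) c] g(1) x c(2)
      by (intro \<phi>_rcos finsupp_mult T.I_r_closed) (simp_all add: L_mult g'(1))
    moreover have "\<phi> (I +> sm c x) = (\<lambda>i. c * g i)"
      using congruent_smult[OF g(2) c(1,3)] g(1) x
      by (intro \<phi>_rcos finsupp_smult ideal_smult_closed[OF T]) (simp_all add: L_smult)
    ultimately show ?thesis using \<phi>_rcos g g' x y by simp
  qed
  then show ?thesis
    unfolding layer_iso_def Let_def seq step using bij by blast
qed

end

lemma kalg_idealI: "ideal I R \<Longrightarrow> kalg R sm \<Longrightarrow> kalg_ideal I R sm"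
  by (simp add: kalg_ideal_def kalg_ideal_axioms_def kalg_def)

section \<open>Algebras of functions with pointwise operations\<close>

lemma falg_ring_cring:
  fixes A :: "('o,'k::field) falg"
  assumes zero: "(\<lambda>p. 0) \<in> snd A" and one: "(\<lambda>p. if p \<in> fst A then 1 else 0) \<in> snd A"
    and add: "\<And>f g. f \<in> snd A \<Longrightarrow> g \<in> snd A \<Longrightarrow> (\<lambda>p. f p + g p) \<in> snd A"
    and uminus: "\<And>f. f \<in> snd A \<Longrightarrow> (\<lambda>p. - f p) \<in> snd A"
    and mult: "\<And>f g. f \<in> snd A \<Longrightarrow> g \<in> snd A \<Longrightarrow> (\<lambda>p. f p * g p) \<in> snd A"
    and support: "\<And>f p. f \<in> snd A \<Longrightarrow> p \<notin> fst A \<Longrightarrow> f p = 0"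
  shows "cring (falg_ring A)"
proof (rule cringI)
  show "abelian_group (falg_ring A)"
  proof (rule abelian_groupI)
    fix x assume "x \<in> carrier (falg_ring A)"
    then show "\<exists>y\<in>carrier (falg_ring A). y \<oplus>\<^bsub>falg_ring A\<^esub> x = \<zero>\<^bsub>falg_ring A\<^esub>"
      using uminus[of x] by (intro bexI[of _ "\<lambda>p. - x p"]) (auto simp: falg_ring_def)
  qed (auto simp: falg_ring_def zero add algebra_simps)
  show "comm_monoid (falg_ring A)"
  proof (rule comm_monoidI)
    fix x assume "x \<in> carrier (falg_ring A)"
    then show "\<one>\<^bsub>falg_ring A\<^esub> \<otimes>\<^bsub>falg_ring A\<^esub> x = x"
      using support[of x] by (auto simp: falg_ring_def fun_eq_iff)
  qed (auto simp: falg_ring_def one mult algebra_simps)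
qed (auto simp: falg_ring_def algebra_simps)

lemma falg_ring_minus:
  assumes "cring (falg_ring A)" "x \<in> snd A" "y \<in> snd A" "(\<lambda>p. - y p) \<in> snd A"
  shows "x \<ominus>\<^bsub>falg_ring A\<^esub> y = (\<lambda>p. x p - y p)"
proof -
  interpret cring "falg_ring A" by fact
  have "\<ominus>\<^bsub>falg_ring A\<^esub> y = (\<lambda>p. - y p)"
    using assms by (intro minus_equality) (auto simp: falg_ring_def)
  then show ?thesis by (simp add: a_minus_def falg_ring_def)
qed

lemma falg_ring_finsum:
  assumes "cring (falg_ring A)" "finite G" "\<And>e. e \<in> G \<Longrightarrow> h e \<in> snd A"
  shows "finsum (falg_ring A) h G = (\<lambda>p. \<Sum>e\<in>G. h e p)"
  using assms(2,3)
proof (induction G rule: finite_induct)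
  case empty
  interpret cring "falg_ring A" by fact
  show ?case using finsum_empty[of h] by (simp add: falg_ring_def)
next
  case (insert x F)
  interpret cring "falg_ring A" by fact
  have "finsum (falg_ring A) h (insert x F) = h x \<oplus>\<^bsub>falg_ring A\<^esub> finsum (falg_ring A) h F"
    using insert by (intro finsum_insert) (auto simp: falg_ring_def)
  then show ?case using insert by (simp add: falg_ring_def)
qed

lemma falg_ring_idealI:
  fixes A :: "('o,'k::field) falg"
  assumes "cring (falg_ring A)" and "J \<subseteq> snd A" and "(\<lambda>p. 0) \<in> J"
    and add: "\<And>f g. f \<in> J \<Longrightarrow> g \<in> J \<Longrightarrow> (\<lambda>p. f p + g p) \<in> J"
    and uminus: "\<And>f. f \<in> J \<Longrightarrow> (\<lambda>p. - f p) \<in> J"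
    and mult: "\<And>f g. f \<in> J \<Longrightarrow> g \<in> snd A \<Longrightarrow> (\<lambda>p. f p * g p) \<in> J"
  shows "ideal J (falg_ring A)"
proof -
  interpret cring "falg_ring A" by fact
  show ?thesis
  proof (rule idealI)
    show "ring (falg_ring A)" by (rule ring_axioms)
    show "subgroup J (add_monoid (falg_ring A))"
    proof (rule add.subgroupI)
      show "J \<subseteq> carrier (falg_ring A)" "J \<noteq> {}" using assms(2,3) by (auto simp: falg_ring_def)
      fix a assume a: "a \<in> J"
      have "\<ominus>\<^bsub>falg_ring A\<^esub> a = (\<lambda>p. - a p)"
        using a assms(2) uminus by (intro minus_equality) (auto simp: falg_ring_def)
      then show "\<ominus>\<^bsub>falg_ring A\<^esub> a \<in> J" using uminus a by simp
    next
      fix a b assume "a \<in> J" "b \<in> J"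
      then show "a \<oplus>\<^bsub>falg_ring A\<^esub> b \<in> J" using add by (simp add: falg_ring_def)
    qed
    fix a x assume "a \<in> J" "x \<in> carrier (falg_ring A)"
    then show "x \<otimes>\<^bsub>falg_ring A\<^esub> a \<in> J" "a \<otimes>\<^bsub>falg_ring A\<^esub> x \<in> J"
      using mult[of a x] by (simp_all add: falg_ring_def mult.commute)
  qed
qed

section \<open>The tree model of \<open>B\<^sub>\<alpha>\<^sub>,\<^sub>1\<close>\<close>

text \<open>The algebra \<open>B\<^sub>a\<^sub>,\<^sub>1\<close> lives on the leaves of a well-founded tree whose nodes carry ordinals
  (their ranks): below a node of successor rank \<open>b + 1\<close> hang the children \<open>Inl k\<close>, \<open>k \<in> \<nat>\<close>, all of
  rank \<open>b\<close>; below a node of limit rank \<open>b\<close> hangs one child \<open>Inr \<gamma>\<close> of rank \<open>\<gamma>\<close> for each \<open>\<gamma> < b\<close>.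
  The leaves are the nodes of rank 0, and the elements of \<open>B\<^sub>a\<^sub>,\<^sub>1\<close> are the functions on leaves
  which, below each inner node, are constant except along finitely many children.\<close>

definition child_rank :: "'o::wellorder \<Rightarrow> nat + 'o \<Rightarrow> 'o option" where
  "child_rank a i = (if \<exists>g. is_pred g a then (if isl i then Some (THE g. is_pred g a) else None)
     else if \<not> zero_ord a \<and> \<not> isl i \<and> projr i < a then Some (projr i) else None)"

fun path_rank :: "'o::wellorder \<Rightarrow> (nat + 'o) list \<Rightarrow> 'o option" where
  "path_rank a [] = Some a"
| "path_rank a (i # q) = (case child_rank a i of None \<Rightarrow> None | Some b \<Rightarrow> path_rank b q)"

definition leaves :: "'o::wellorder \<Rightarrow> 'o pt set" where
  "leaves a = {q. \<exists>b. path_rank a q = Some b \<and> zero_ord b}"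

definition dev_children :: "'o::wellorder \<Rightarrow> ('o pt \<Rightarrow> 'k::zero) \<Rightarrow> 'o pt \<Rightarrow> 'k \<Rightarrow> (nat + 'o) set" where
  "dev_children a f q c = {i. \<exists>p. q @ i # p \<in> leaves a \<and> f (q @ i # p) \<noteq> c}"

definition tree_carrier :: "'o::wellorder \<Rightarrow> ('o pt \<Rightarrow> 'k::zero) set" where
  "tree_carrier a = {f. (\<forall>q. q \<notin> leaves a \<longrightarrow> f q = 0) \<and>
      (\<forall>q b. path_rank a q = Some b \<and> \<not> zero_ord b \<longrightarrow> (\<exists>c. finite (dev_children a f q c)))}"

lemma child_rank_less: "child_rank a i = Some b \<Longrightarrow> b < a"
  unfolding child_rank_def using The_is_pred
  by (auto split: if_splits simp: is_pred_def)

lemma child_rank_zero_ord: "zero_ord a \<Longrightarrow> child_rank a i = None"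
  unfolding child_rank_def zero_ord_def is_pred_def by auto

lemma child_rank_succ: "is_pred p b \<Longrightarrow> child_rank b i = (if isl i then Some p else None)"
  unfolding child_rank_def using The_is_pred by auto

lemma child_rank_limit:
  "\<not> (\<exists>p. is_pred p b) \<Longrightarrow> child_rank b i = (if \<not> isl i \<and> projr i < b then Some (projr i) else None)"
  unfolding child_rank_def zero_ord_def by auto

lemma path_rank_le: "path_rank a q = Some b \<Longrightarrow> b \<le> a"
proof (induction q arbitrary: a)
  case (Cons i q)
  then obtain c where "child_rank a i = Some c" "path_rank c q = Some b"
    by (auto split: option.splits)
  with Cons.IH child_rank_less[of a i c] show ?case by fastforce
qed simp

lemma path_rank_Cons_less: "path_rank a (i # q) = Some b \<Longrightarrow> b < a"
  using path_rank_le child_rank_less by (fastforce split: option.splits)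

lemma path_rank_append:
  "path_rank a (q @ r) = (case path_rank a q of None \<Rightarrow> None | Some b \<Rightarrow> path_rank b r)"
  by (induction q arbitrary: a) (auto split: option.splits)

lemma path_rank_reach: "(g::'o::wellorder) \<le> b \<Longrightarrow> \<exists>r. path_rank b r = Some g"
proof (induction b rule: less_induct)
  case (less b)
  show ?case
  proof (cases "g = b")
    case True then show ?thesis by (intro exI[of _ "[]"]) simp
  next
    case False
    then have gb: "g < b" using less.prems by simp
    show ?thesis
    proof (cases "\<exists>p. is_pred p b")
      case True
      then obtain p where p: "is_pred p b" by blast
      then have "g \<le> p" using gb by (rule is_pred_less_imp_le)
      then obtain r where "path_rank p r = Some g" using less.IH[of p] p unfolding is_pred_def by blast
      then show ?thesis using child_rank_succ[OF p] by (intro exI[of _ "Inl 0 # r"]) simp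
    next
      case False
      then show ?thesis using child_rank_limit[OF False] gb by (intro exI[of _ "[Inr g]"]) simp
    qed
  qed
qed

lemma path_rank_reach_leaf: "\<exists>r d. path_rank (b::'o::wellorder) r = Some d \<and> zero_ord d"
  using path_rank_reach[of "LEAST x. True" b] zero_ord_Least by (auto intro: Least_le)

lemma path_rank_set:
  "path_rank b q = Some d \<Longrightarrow> set q \<subseteq> range Inl \<union> Inr ` {\<gamma>. \<gamma> < (b::'o::wellorder)}"
proof (induction q arbitrary: b)
  case (Cons i q)
  then obtain c where c: "child_rank b i = Some c" "path_rank c q = Some d"
    by (auto split: option.splits)
  have "i \<in> range Inl \<union> Inr ` {\<gamma>. \<gamma> < b}"
    using c(1) unfolding child_rank_def by (cases i) (auto split: if_splits)
  moreover have "set q \<subseteq> range Inl \<union> Inr ` {\<gamma>. \<gamma> < b}"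
    using Cons.IH[OF c(2)] child_rank_less[OF c(1)] by (auto intro: less_trans)
  ultimately show ?case by simp
qed simp

lemma children_infinite:
  assumes "(g::'o::wellorder) < b"
  shows "infinite {i. \<exists>d. child_rank b i = Some d \<and> g \<le> d}"
proof (cases "\<exists>p. is_pred p b")
  case True
  then obtain p where p: "is_pred p b" by blast
  then have "g \<le> p" using assms by (rule is_pred_less_imp_le)
  then have "range Inl \<subseteq> {i. \<exists>d. child_rank b i = Some d \<and> g \<le> d}"
    using child_rank_succ[OF p] by auto
  moreover have "infinite (range (Inl :: nat \<Rightarrow> nat + 'o))"
    by (rule range_inj_infinite) (simp add: inj_def)
  ultimately show ?thesis using finite_subset by blast
next
  case False
  have "Inr ` {d. g \<le> d \<and> d < b} \<subseteq> {i. \<exists>d. child_rank b i = Some d \<and> g \<le> d}"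
    using child_rank_limit[OF False] by auto
  moreover have "infinite (Inr ` {d. g \<le> d \<and> d < b} :: (nat + 'o) set)"
    using limit_infinite_interval[OF False assms] finite_imageD[of Inr] by (auto simp: inj_on_def)
  ultimately show ?thesis using finite_subset by blast
qed

lemma Nil_in_leaves: "([] \<in> leaves a) = zero_ord a"
  unfolding leaves_def by simp

lemma Cons_in_leaves: "child_rank a i = Some b \<Longrightarrow> (i # p \<in> leaves a) = (p \<in> leaves b)"
  unfolding leaves_def by simp

lemma Cons_notin_leaves: "child_rank a i = None \<Longrightarrow> i # p \<notin> leaves a"
  unfolding leaves_def by simp

lemma leaves_zero_ord: "zero_ord a \<Longrightarrow> leaves a = {[]}"
  unfolding leaves_def by (auto simp: child_rank_zero_ord elim: path_rank.elims)

lemma dev_children_Cons: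
  "child_rank a i = Some b \<Longrightarrow> dev_children a f (i # q) c = dev_children b (\<lambda>p. f (i # p)) q c"
  unfolding dev_children_def by (simp add: Cons_in_leaves)

lemma append_Cons_eq_append_cases:
  assumes "q @ i # p = q0 @ r"
  shows "(\<exists>r'. q = q0 @ r') \<or> (\<exists>r'. q0 = q @ i # r')"
proof -
  obtain us where "q = q0 @ us \<and> us @ i # p = r \<or> q @ us = q0 \<and> i # p = us @ r"
    using assms unfolding append_eq_append_conv2 by blast
  then show ?thesis by (cases us) auto
qed

lemma Rcons_cong: "(\<And>i. i \<in> A \<Longrightarrow> Rs i = Rs' i) \<Longrightarrow> Rcons A Rs = Rcons A Rs'"
proof -
  assume h: "\<And>i. i \<in> A \<Longrightarrow> Rs i = Rs' i"
  then have "{i # p | i p. i \<in> A \<and> p \<in> fst (Rs i)} = {i # p | i p. i \<in> A \<and> p \<in> fst (Rs' i)}"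
    by auto
  then show ?thesis unfolding Rcons_def using h by (auto simp: Ball_def)
qed

context
  fixes a :: "'o::wellorder" and A and Rs :: "nat + 'o \<Rightarrow> ('o, 'k::field) falg"
  assumes nonzero: "\<not> zero_ord a"
    and children: "\<And>i. (child_rank a i \<noteq> None) = (i \<in> A)"
    and subtrees: "\<And>i. i \<in> A \<Longrightarrow> Rs i = (leaves (the (child_rank a i)), tree_carrier (the (child_rank a i)))"
begin

lemma Rcons_leaves: "{i # p | i p. i \<in> A \<and> p \<in> fst (Rs i)} = leaves a"
proof (rule Set.set_eqI, rule iffI)
  fix q assume "q \<in> {i # p | i p. i \<in> A \<and> p \<in> fst (Rs i)}"
  then obtain i p where q: "q = i # p" "i \<in> A" "p \<in> fst (Rs i)" by blast
  then obtain b where "child_rank a i = Some b" using children by blast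
  then show "q \<in> leaves a" using q subtrees by (simp add: Cons_in_leaves)
next
  fix q assume q: "q \<in> leaves a"
  then obtain i p where qe: "q = i # p" using nonzero Nil_in_leaves by (cases q) auto
  then obtain b where b: "child_rank a i = Some b" using q Cons_notin_leaves by fastforce
  then have "i \<in> A" using children by blast
  then show "q \<in> {i # p | i p. i \<in> A \<and> p \<in> fst (Rs i)}"
    using q qe b subtrees[of i] by (auto simp: Cons_in_leaves)
qed

lemma Rcons_carrier_subset: "snd (Rcons A Rs) \<subseteq> tree_carrier a"
proof
  fix f :: "'o pt \<Rightarrow> 'k" assume "f \<in> snd (Rcons A Rs)"
  then obtain c F where F: "finite F" "F \<subseteq> A"
    and comp: "\<And>i. i \<in> A \<Longrightarrow> (\<lambda>p. f (i # p)) \<in> snd (Rs i) \<and>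
                (i \<notin> F \<longrightarrow> (\<forall>p. f (i # p) = (if p \<in> fst (Rs i) then c else 0)))"
    and van: "\<And>q. q \<notin> leaves a \<Longrightarrow> f q = 0"
    unfolding Rcons_def Rcons_leaves snd_conv mem_Collect_eq by blast
  have "\<exists>c. finite (dev_children a f q c)" if qb: "path_rank a q = Some b" "\<not> zero_ord b" for q b
  proof (cases q)
    case Nil
    have "dev_children a f [] c \<subseteq> F"
    proof
      fix i assume "i \<in> dev_children a f [] c"
      then obtain p where p: "i # p \<in> leaves a" "f (i # p) \<noteq> c" by (auto simp: dev_children_def)
      then obtain b' where b': "child_rank a i = Some b'" using Cons_notin_leaves by fastforce
      then have "i \<in> A" using children by blast
      moreover have "p \<in> fst (Rs i)" using p b' subtrees[OF \<open>i \<in> A\<close>] by (simp add: Cons_in_leaves)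
      ultimately show "i \<in> F" using comp[OF \<open>i \<in> A\<close>] p by auto
    qed
    then show ?thesis using F Nil finite_subset by blast
  next
    case (Cons i q')
    then obtain b' where b': "child_rank a i = Some b'" "path_rank b' q' = Some b"
      using qb by (auto split: option.splits)
    then have "i \<in> A" using children by blast
    then have "(\<lambda>p. f (i # p)) \<in> tree_carrier b'" using comp subtrees b' by fastforce
    then obtain c where "finite (dev_children b' (\<lambda>p. f (i # p)) q' c)"
      using b' qb unfolding tree_carrier_def by blast
    then have "finite (dev_children a f q c)" using Cons by (simp add: dev_children_Cons[OF b'(1)])
    then show ?thesis by blast
  qed
  then show "f \<in> tree_carrier a" unfolding tree_carrier_def using van by auto
qed

lemma tree_carrier_subset_Rcons: "tree_carrier a \<subseteq> snd (Rcons A Rs)"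
proof
  fix f :: "'o pt \<Rightarrow> 'k" assume f: "f \<in> tree_carrier a"
  then obtain c where c: "finite (dev_children a f [] c)"
    using nonzero unfolding tree_carrier_def by fastforce
  have van: "\<And>q. q \<notin> leaves a \<Longrightarrow> f q = 0" using f unfolding tree_carrier_def by blast
  have devA: "dev_children a f [] c \<subseteq> A"
  proof
    fix i assume "i \<in> dev_children a f [] c"
    then obtain p where "i # p \<in> leaves a" by (auto simp: dev_children_def)
    then show "i \<in> A" using children Cons_notin_leaves by blast
  qed
  have "(\<lambda>p. f (i # p)) \<in> snd (Rs i) \<and>
        (i \<notin> dev_children a f [] c \<longrightarrow> (\<forall>p. f (i # p) = (if p \<in> fst (Rs i) then c else 0)))"
    if iA: "i \<in> A" for i
  proof -
    obtain b where b: "child_rank a i = Some b" using children iA by blast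
    have "(\<lambda>p. f (i # p)) \<in> tree_carrier b"
      unfolding tree_carrier_def
    proof (intro CollectI conjI allI impI)
      fix p assume "p \<notin> leaves b" then show "f (i # p) = 0" using van b by (simp add: Cons_in_leaves)
    next
      fix q b' assume "path_rank b q = Some b' \<and> \<not> zero_ord b'"
      then have "path_rank a (i # q) = Some b' \<and> \<not> zero_ord b'" using b by simp
      then obtain c' where "finite (dev_children a f (i # q) c')" using f unfolding tree_carrier_def by blast
      then have "finite (dev_children b (\<lambda>p. f (i # p)) q c')" by (simp add: dev_children_Cons[OF b])
      then show "\<exists>c. finite (dev_children b (\<lambda>p. f (i # p)) q c)" by blast
    qed
    moreover have "f (i # p) = (if p \<in> leaves b then c else 0)" if "i \<notin> dev_children a f [] c" for p
      using that van[of "i # p"] b by (auto simp: dev_children_def Cons_in_leaves)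
    ultimately show ?thesis using subtrees[OF iA] b by simp
  qed
  then show "f \<in> snd (Rcons A Rs)" unfolding Rcons_def Rcons_leaves snd_conv
    using c devA van by blast
qed

lemma Rcons_tree: "Rcons A Rs = (leaves a, tree_carrier a)"
proof -
  have "fst (Rcons A Rs) = leaves a" unfolding Rcons_def fst_conv by (rule Rcons_leaves)
  moreover have "snd (Rcons A Rs) = tree_carrier a"
    using Rcons_carrier_subset tree_carrier_subset_Rcons by (rule equalityI)
  ultimately show ?thesis by (simp add: prod_eq_iff)
qed

end

lemma Balg1_unfold: "(Balg1 (a::'o::wellorder) :: ('o,'k::field) falg) =
  (if \<not> (\<exists>\<gamma>. \<gamma> < a) then ({[]}, {(\<lambda>p. if p = [] then c else 0) | c. True})
   else if \<exists>\<gamma>. is_pred \<gamma> a then Rcons (range Inl) (\<lambda>i. Balg1 (THE \<gamma>. is_pred \<gamma> a))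
   else Rcons (Inr ` {\<beta>. \<beta> < a}) (\<lambda>i. Balg1 (projr i)))"
proof -
  have "is_pred g a \<Longrightarrow> (THE \<gamma>. is_pred \<gamma> a) < a" for g
    using The_is_pred[of g a] by (simp add: is_pred_def)
  moreover have "Rcons (Inr ` {\<beta>. \<beta> < a}) (\<lambda>i. cut Balg1 {(x, y). x < y} a (projr i)) =
           (Rcons (Inr ` {\<beta>. \<beta> < a}) (\<lambda>i. Balg1 (projr i)) :: ('o,'k) falg)"
    by (rule Rcons_cong) (auto simp: cut_def)
  ultimately show ?thesis
    by (subst Balg1_def, subst wfrec[OF wf], fold Balg1_def) (auto simp: cut_def)
qed

lemma Balg1_tree: "(Balg1 (a::'o::wellorder) :: ('o,'k::field) falg) = (leaves a, tree_carrier a)"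
proof (induction a rule: less_induct)
  case (less a)
  show ?case
  proof (cases "zero_ord a")
    case True
    have root_only: "path_rank a q = Some b \<Longrightarrow> q = []" for q b
      using True by (cases q) (auto simp: child_rank_zero_ord)
    have "(tree_carrier a :: ('o pt \<Rightarrow> 'k) set) = {(\<lambda>p. if p = [] then c else 0) | c. True}"
    proof (rule Set.set_eqI, rule iffI)
      fix f :: "'o pt \<Rightarrow> 'k" assume "f \<in> tree_carrier a"
      then have "f = (\<lambda>p. if p = [] then f [] else 0)"
        unfolding tree_carrier_def leaves_zero_ord[OF True] by auto
      then show "f \<in> {(\<lambda>p. if p = [] then c else 0) | c. True}" by blast
    next
      fix f :: "'o pt \<Rightarrow> 'k" assume "f \<in> {(\<lambda>p. if p = [] then c else 0) | c. True}"
      then show "f \<in> tree_carrier a"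
        unfolding tree_carrier_def leaves_zero_ord[OF True] using root_only True by fastforce
    qed
    then show ?thesis using True leaves_zero_ord[OF True] by (subst Balg1_unfold) (simp add: zero_ord_def)
  next
    case nonzero: False
    show ?thesis
    proof (cases "\<exists>g. is_pred g a")
      case True
      then obtain g where g: "is_pred g a" by blast
      have "Rcons (range Inl) (\<lambda>i. Balg1 g) = (leaves a, tree_carrier a :: ('o pt \<Rightarrow> 'k) set)"
      proof (rule Rcons_tree[OF nonzero])
        show "(child_rank a i \<noteq> None) = (i \<in> range Inl)" for i
          by (cases i) (auto simp: child_rank_succ[OF g])
        show "i \<in> range Inl \<Longrightarrow> (Balg1 g :: ('o,'k) falg) =
            (leaves (the (child_rank a i)), tree_carrier (the (child_rank a i)))" for i
          using less[of g] g by (auto simp: child_rank_succ[OF g] is_pred_def)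
      qed
      then show ?thesis using nonzero g The_is_pred[OF g] by (subst Balg1_unfold) (auto simp: zero_ord_def)
    next
      case False
      have "Rcons (Inr ` {\<beta>. \<beta> < a}) (\<lambda>i. Balg1 (projr i)) = (leaves a, tree_carrier a :: ('o pt \<Rightarrow> 'k) set)"
      proof (rule Rcons_tree[OF nonzero])
        show "(child_rank a i \<noteq> None) = (i \<in> Inr ` {\<beta>. \<beta> < a})" for i
          by (cases i) (auto simp: child_rank_limit[OF False])
        show "i \<in> Inr ` {\<beta>. \<beta> < a} \<Longrightarrow> (Balg1 (projr i) :: ('o,'k) falg) =
            (leaves (the (child_rank a i)), tree_carrier (the (child_rank a i)))" for i
          using less by (auto simp: child_rank_limit[OF False])
      qed
      then show ?thesis using nonzero False by (subst Balg1_unfold) (simp add: zero_ord_def)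
    qed
  qed
qed

section \<open>The forest model of \<open>B\<^sub>\<alpha>\<^sub>,\<^sub>n\<close>\<close>

locale forest =
  fixes \<alpha> :: "'o::wellorder" and n :: nat
begin

definition forest_rank :: "'o pt \<Rightarrow> 'o option" where
  "forest_rank q = (case q of [] \<Rightarrow> None | i # q' \<Rightarrow> (if isl i \<and> projl i < n then path_rank \<alpha> q' else None))"

definition forest_leaves :: "'o pt set" where
  "forest_leaves = {q. \<exists>b. forest_rank q = Some b \<and> zero_ord b}"

definition forest_dev :: "('o pt \<Rightarrow> 'k::zero) \<Rightarrow> 'o pt \<Rightarrow> 'k \<Rightarrow> (nat + 'o) set" where
  "forest_dev f q c = {i. \<exists>p. q @ i # p \<in> forest_leaves \<and> f (q @ i # p) \<noteq> c}"

definition B_carrier :: "('o pt \<Rightarrow> 'k::zero) set" where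
  "B_carrier = {f. (\<forall>q. q \<notin> forest_leaves \<longrightarrow> f q = 0) \<and>
              (\<forall>q b. forest_rank q = Some b \<and> \<not> zero_ord b \<longrightarrow> (\<exists>c. finite (forest_dev f q c)))}"

lemma forest_rank_Nil [simp]: "forest_rank [] = None"
  by (simp add: forest_rank_def)

lemma forest_rank_Inl: "forest_rank (Inl k # q) = (if k < n then path_rank \<alpha> q else None)"
  by (simp add: forest_rank_def)

lemma forest_rank_Cons_Some:
  "forest_rank (i # q) = Some b \<Longrightarrow> \<exists>k. i = Inl k \<and> k < n \<and> path_rank \<alpha> q = Some b"
  by (cases i) (auto simp: forest_rank_def split: if_splits)

lemma forest_rank_root: "k < n \<Longrightarrow> forest_rank [Inl k] = Some \<alpha>"
  by (simp add: forest_rank_Inl)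

lemma forest_rank_root_prefix: "forest_rank q = Some b \<Longrightarrow> \<exists>k r. k < n \<and> q = [Inl k] @ r"
  by (cases q) (auto dest!: forest_rank_Cons_Some)

lemma forest_rank_le: "forest_rank q = Some b \<Longrightarrow> b \<le> \<alpha>"
  by (cases q) (auto dest!: forest_rank_Cons_Some intro: path_rank_le)

lemma forest_rank_append: "forest_rank q = Some b \<Longrightarrow> forest_rank (q @ r) = path_rank b r"
  by (cases q) (auto dest!: forest_rank_Cons_Some simp: forest_rank_Inl path_rank_append)

lemma forest_rank_appendD:
  "forest_rank (q @ r) = Some d \<Longrightarrow> q \<noteq> [] \<Longrightarrow> \<exists>b. forest_rank q = Some b \<and> path_rank b r = Some d"
  by (cases q) (auto dest!: forest_rank_Cons_Some simp: forest_rank_Inl path_rank_append split: option.splits)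

lemma forest_rank_append_le:
  "forest_rank q = Some b \<Longrightarrow> forest_rank (q @ r) = Some d \<Longrightarrow> d \<le> b \<and> (r \<noteq> [] \<longrightarrow> d < b)"
  using forest_rank_append[of q b r] path_rank_le[of b r d] by (cases r) (auto intro: path_rank_Cons_less)

lemma forest_rank_snoc: "forest_rank q = Some b \<Longrightarrow> forest_rank (q @ [i]) = child_rank b i"
  using forest_rank_append[of q b "[i]"] by (simp split: option.splits)

lemma forest_rank_leaf_extend: "forest_rank q = Some b \<Longrightarrow> zero_ord b \<Longrightarrow> forest_rank (q @ i # r) = None"
  using forest_rank_append[of q b "i # r"] by (simp add: child_rank_zero_ord)

lemma forest_node_has_leaf: "forest_rank q = Some b \<Longrightarrow> \<exists>r. q @ r \<in> forest_leaves"
  using path_rank_reach_leaf[of b] forest_rank_append[of q b] unfolding forest_leaves_def by fastforce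

lemma same_rank_prefix_eq:
  assumes "forest_rank q = Some g" "forest_rank q' = Some g" "q @ r = q' @ r'"
  shows "q = q'"
proof -
  obtain us where "q = q' @ us \<and> us @ r = r' \<or> q @ us = q' \<and> r = us @ r'"
    using assms(3) unfolding append_eq_append_conv2 by blast
  then show ?thesis
    using forest_rank_append_le[OF assms(1), of us g] forest_rank_append_le[OF assms(2), of us g] assms(1,2)
    by (cases "us = []") auto
qed

lemma Inl_Cons_in_forest_leaves: "(Inl k # p \<in> forest_leaves) = (k < n \<and> p \<in> leaves \<alpha>)"
  by (auto simp: forest_leaves_def leaves_def forest_rank_Inl)

lemma forest_leavesE: "q \<in> forest_leaves \<Longrightarrow> \<exists>k p. q = Inl k # p \<and> k < n \<and> p \<in> leaves \<alpha>"
  unfolding forest_leaves_def leaves_def by (cases q) (auto dest!: forest_rank_Cons_Some)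

lemma forest_dev_Inl:
  "k < n \<Longrightarrow> forest_dev f (Inl k # q) c = dev_children \<alpha> (\<lambda>p. f (Inl k # p)) q c"
  unfolding forest_dev_def dev_children_def by (simp add: Inl_Cons_in_forest_leaves)

lemma B_carrier_root_subtree:
  assumes f: "f \<in> B_carrier" and k: "k < n"
  shows "(\<lambda>p. f (Inl k # p)) \<in> tree_carrier \<alpha>"
  unfolding tree_carrier_def
proof (intro CollectI conjI allI impI)
  fix q assume "q \<notin> leaves \<alpha>"
  then show "f (Inl k # q) = 0" using f k Inl_Cons_in_forest_leaves unfolding B_carrier_def by blast
next
  fix q b assume "path_rank \<alpha> q = Some b \<and> \<not> zero_ord b"
  then have "forest_rank (Inl k # q) = Some b \<and> \<not> zero_ord b" using k by (simp add: forest_rank_Inl)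
  then obtain c where "finite (forest_dev f (Inl k # q) c)" using f unfolding B_carrier_def by blast
  then have "finite (dev_children \<alpha> (\<lambda>p. f (Inl k # p)) q c)" by (simp add: forest_dev_Inl[OF k])
  then show "\<exists>c. finite (dev_children \<alpha> (\<lambda>p. f (Inl k # p)) q c)" by blast
qed

lemma B_carrierI:
  assumes subtrees: "\<And>k. k < n \<Longrightarrow> (\<lambda>p. f (Inl k # p)) \<in> tree_carrier \<alpha>"
    and support: "\<And>q. q \<notin> forest_leaves \<Longrightarrow> f q = 0"
  shows "f \<in> B_carrier"
  unfolding B_carrier_def
proof (intro CollectI conjI allI impI)
  fix q b assume qb: "forest_rank q = Some b \<and> \<not> zero_ord b"
  then obtain q' k where q: "q = Inl k # q'" "k < n" "path_rank \<alpha> q' = Some b"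
    by (cases q) (auto dest!: forest_rank_Cons_Some)
  then obtain c where "finite (dev_children \<alpha> (\<lambda>p. f (Inl k # p)) q' c)"
    using subtrees qb unfolding tree_carrier_def by blast
  then have "finite (forest_dev f q c)" using q(1) by (simp add: forest_dev_Inl[OF q(2)])
  then show "\<exists>c. finite (forest_dev f q c)" by blast
qed (rule support)

lemma Balgn_forest: "(Balgn \<alpha> n :: ('o,'k::field) falg) = (forest_leaves, B_carrier)"
proof -
  have "{Inl k # p | k p. k < n \<and> p \<in> leaves \<alpha>} = forest_leaves"
    using forest_leavesE Inl_Cons_in_forest_leaves by blast
  moreover have "{f :: 'o pt \<Rightarrow> 'k. (\<forall>k<n. (\<lambda>p. f (Inl k # p)) \<in> tree_carrier \<alpha>) \<and>
      (\<forall>q. q \<notin> forest_leaves \<longrightarrow> f q = 0)} = B_carrier"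
    using B_carrier_root_subtree B_carrierI unfolding B_carrier_def by blast
  ultimately show ?thesis unfolding Balgn_def Let_def Balg1_tree fst_conv snd_conv by simp
qed

lemma B_carrier_vanish: "f \<in> B_carrier \<Longrightarrow> p \<notin> forest_leaves \<Longrightarrow> f p = 0"
  unfolding B_carrier_def by blast

lemma B_carrier_map2:
  assumes "f \<in> B_carrier" "g \<in> B_carrier" "F 0 0 = 0"
  shows "(\<lambda>p. F (f p) (g p)) \<in> B_carrier"
  unfolding B_carrier_def
proof (intro CollectI conjI allI impI)
  fix q assume "q \<notin> forest_leaves"
  then show "F (f q) (g q) = 0" using assms B_carrier_vanish[OF assms(1)] B_carrier_vanish[OF assms(2)] by simp
next
  fix q b assume qb: "forest_rank q = Some b \<and> \<not> zero_ord b"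
  obtain c d where cd: "finite (forest_dev f q c)" "finite (forest_dev g q d)"
    using assms qb unfolding B_carrier_def by blast
  have "forest_dev (\<lambda>p. F (f p) (g p)) q (F c d) \<subseteq> forest_dev f q c \<union> forest_dev g q d"
    unfolding forest_dev_def by auto
  then have "finite (forest_dev (\<lambda>p. F (f p) (g p)) q (F c d))" using cd finite_subset by blast
  then show "\<exists>c. finite (forest_dev (\<lambda>p. F (f p) (g p)) q c)" by blast
qed

lemma B_carrier_map: "f \<in> B_carrier \<Longrightarrow> F 0 = 0 \<Longrightarrow> (\<lambda>p. F (f p)) \<in> B_carrier"
  using B_carrier_map2[of f f "\<lambda>x y. F x"] by simp

lemma B_carrier_const: "(\<lambda>p. if p \<in> forest_leaves then c else 0) \<in> B_carrier"
  unfolding B_carrier_def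
proof (intro CollectI conjI allI impI)
  fix q b
  have "forest_dev (\<lambda>p. if p \<in> forest_leaves then c else 0) q c = {}" unfolding forest_dev_def by auto
  then show "\<exists>d. finite (forest_dev (\<lambda>p. if p \<in> forest_leaves then c else 0) q d)" by (metis finite.emptyI)
qed simp

lemma B_carrier_zero: "(\<lambda>p. 0) \<in> B_carrier"
  using B_carrier_const[of 0] by simp

lemma B_carrier_sum:
  "finite G \<Longrightarrow> (\<And>e. e \<in> G \<Longrightarrow> h e \<in> B_carrier) \<Longrightarrow>
    (\<lambda>p. \<Sum>e\<in>G. (h e p :: 'k::comm_monoid_add)) \<in> B_carrier"
proof (induction G rule: finite_induct)
  case (insert a F)
  then have "(\<lambda>p. h a p + (\<Sum>e\<in>F. h e p)) \<in> B_carrier" by (auto intro: B_carrier_map2[where F = "(+)"])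
  then show ?case using insert by simp
qed (simp add: B_carrier_zero)

lemma forest_dev_off_cone:
  assumes "\<And>p. f p \<noteq> 0 \<Longrightarrow> \<exists>r. p = q0 @ r" and "\<not> (\<exists>r. q = q0 @ r)"
  shows "forest_dev f q 0 \<subseteq> {q0 ! length q}"
proof
  fix i assume "i \<in> forest_dev f q 0"
  then obtain p where "f (q @ i # p) \<noteq> 0" unfolding forest_dev_def by blast
  then obtain r where "q @ i # p = q0 @ r" using assms(1) by blast
  then have "(\<exists>r'. q = q0 @ r') \<or> (\<exists>r'. q0 = q @ i # r')" by (rule append_Cons_eq_append_cases)
  then obtain r' where "q0 = q @ i # r'" using assms(2) by blast
  then show "i \<in> {q0 ! length q}" by simp
qed

definition cone :: "'o pt \<Rightarrow> 'o pt \<Rightarrow> 'k::{zero,one}" where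
  "cone q0 = (\<lambda>p. if p \<in> forest_leaves \<and> (\<exists>r. p = q0 @ r) then 1 else 0)"

lemma cone_idem: "(\<lambda>p. cone q p * cone q p) = (cone q :: 'o pt \<Rightarrow> 'k::field)"
  by (simp add: fun_eq_iff cone_def)

lemma cone_in_B_carrier: "cone q0 \<in> B_carrier"
  unfolding B_carrier_def
proof (intro CollectI conjI allI impI)
  fix q assume "q \<notin> forest_leaves" then show "cone q0 q = 0" by (simp add: cone_def)
next
  fix q b
  show "\<exists>c. finite (forest_dev (cone q0) q c)"
  proof (cases "\<exists>r. q = q0 @ r")
    case True
    then have "forest_dev (cone q0) q 1 = {}" unfolding forest_dev_def cone_def by auto
    then show ?thesis by (metis finite.emptyI)
  next
    case False
    have "forest_dev (cone q0) q 0 \<subseteq> {q0 ! length q}"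
      by (rule forest_dev_off_cone[OF _ False]) (simp add: cone_def split: if_splits)
    then show ?thesis using finite_subset by blast
  qed
qed

lemma B_ring_eq: "B_ring \<alpha> n = falg_ring (forest_leaves, B_carrier)"
  by (simp add: B_ring_def Balgn_forest)

lemma B_ring_simps:
  "carrier (B_ring \<alpha> n) = B_carrier"
  "x \<oplus>\<^bsub>B_ring \<alpha> n\<^esub> y = (\<lambda>p. x p + y p)"
  "x \<otimes>\<^bsub>B_ring \<alpha> n\<^esub> y = (\<lambda>p. x p * y p)"
  "\<zero>\<^bsub>B_ring \<alpha> n\<^esub> = (\<lambda>p. 0)"
  "\<one>\<^bsub>B_ring \<alpha> n\<^esub> = (\<lambda>p. if p \<in> forest_leaves then 1 else 0)"
  unfolding B_ring_eq by (auto simp: falg_ring_def)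

lemma B_ring_cring: "cring (B_ring \<alpha> n :: ('o pt \<Rightarrow> 'k::field) ring)"
  unfolding B_ring_eq
proof (rule falg_ring_cring, unfold fst_conv snd_conv)
  show "(\<lambda>p. 0::'k) \<in> B_carrier" by (rule B_carrier_zero)
  show "(\<lambda>p. if p \<in> forest_leaves then 1::'k else 0) \<in> B_carrier" by (rule B_carrier_const)
  show "\<And>f g::'o pt \<Rightarrow> 'k. f \<in> B_carrier \<Longrightarrow> g \<in> B_carrier \<Longrightarrow> (\<lambda>p. f p + g p) \<in> B_carrier"
    "\<And>f g::'o pt \<Rightarrow> 'k. f \<in> B_carrier \<Longrightarrow> g \<in> B_carrier \<Longrightarrow> (\<lambda>p. f p * g p) \<in> B_carrier"
    by (rule B_carrier_map2; simp)+
  show "\<And>f::'o pt \<Rightarrow> 'k. f \<in> B_carrier \<Longrightarrow> (\<lambda>p. - f p) \<in> B_carrier"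
    by (rule B_carrier_map) auto
qed (rule B_carrier_vanish)

lemma B_ring_minus:
  "x \<in> B_carrier \<Longrightarrow> y \<in> B_carrier \<Longrightarrow> x \<ominus>\<^bsub>(B_ring \<alpha> n :: ('o pt \<Rightarrow> 'k::field) ring)\<^esub> y = (\<lambda>p. x p - y p)"
  unfolding B_ring_eq
  by (rule falg_ring_minus) (use B_ring_cring[unfolded B_ring_eq] B_carrier_map[of y uminus] in auto)

lemma B_ring_finsum:
  "finite G \<Longrightarrow> (\<And>e. e \<in> G \<Longrightarrow> h e \<in> B_carrier) \<Longrightarrow>
    finsum (B_ring \<alpha> n :: ('o pt \<Rightarrow> 'k::field) ring) h G = (\<lambda>p. \<Sum>e\<in>G. h e p)"
  unfolding B_ring_eq by (rule falg_ring_finsum) (use B_ring_cring[unfolded B_ring_eq] in auto)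

lemma B_ring_kalg: "kalg (B_ring \<alpha> n :: ('o pt \<Rightarrow> 'k::field) ring) falg_smult"
proof -
  have "\<And>(x::'o pt \<Rightarrow> 'k) c. x \<in> B_carrier \<Longrightarrow> (\<lambda>p. c * x p) \<in> B_carrier"
    by (rule B_carrier_map) auto
  then show ?thesis
    unfolding kalg_def B_ring_simps falg_smult_def
    using B_ring_cring by (simp add: distrib_left distrib_right mult.assoc)
qed

lemma B_ring_vn_regular: "vn_regular (B_ring \<alpha> n :: ('o pt \<Rightarrow> 'k::field) ring)"
  unfolding vn_regular_def B_ring_simps
proof
  fix a :: "'o pt \<Rightarrow> 'k" assume a: "a \<in> B_carrier"
  have "a = (\<lambda>p. a p * inverse (a p) * a p)"
  proof
    fix p show "a p = a p * inverse (a p) * a p" by (cases "a p = 0") auto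
  qed
  moreover have "(\<lambda>p. inverse (a p)) \<in> B_carrier" using B_carrier_map[OF a, of inverse] by simp
  ultimately show "\<exists>x\<in>B_carrier. a = (\<lambda>p. a p * x p * a p)" by (rule bexI)
qed

text \<open>Elements of \<open>B\<^sub>\<alpha>\<^sub>,\<^sub>n\<close> extend to locally constant functions on the scattered space of all
  nodes; \<open>vanishes_near f q\<close> says that this extension vanishes on a neighbourhood of the node \<open>q\<close>.\<close>

definition vanishes_near :: "('o pt \<Rightarrow> 'k::zero) \<Rightarrow> 'o pt \<Rightarrow> bool" where
  "vanishes_near f q \<longleftrightarrow> f q = 0 \<and> finite (forest_dev f q 0)"

definition vanish_ge :: "'o \<Rightarrow> ('o pt \<Rightarrow> 'k::zero) set" where
  "vanish_ge g = {f \<in> B_carrier. \<forall>q b. forest_rank q = Some b \<and> g \<le> b \<longrightarrow> vanishes_near f q}"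

definition vanish_gt :: "'o \<Rightarrow> ('o pt \<Rightarrow> 'k::zero) set" where
  "vanish_gt g = {f \<in> B_carrier. \<forall>q b. forest_rank q = Some b \<and> g < b \<longrightarrow> vanishes_near f q}"

lemma vanishes_near_map2:
  assumes "vanishes_near f q" "vanishes_near g q" "F 0 0 = 0"
  shows "vanishes_near (\<lambda>p. F (f p) (g p)) q"
proof -
  have "forest_dev (\<lambda>p. F (f p) (g p)) q 0 \<subseteq> forest_dev f q 0 \<union> forest_dev g q 0"
    unfolding forest_dev_def using assms(3) by auto
  then show ?thesis using assms unfolding vanishes_near_def using finite_subset by auto
qed

lemma vanishes_near_absorb:
  assumes "vanishes_near f q" "\<And>y. F 0 y = 0"
  shows "vanishes_near (\<lambda>p. F (f p) (g p)) q"
proof -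
  have "forest_dev (\<lambda>p. F (f p) (g p)) q 0 \<subseteq> forest_dev f q 0"
    unfolding forest_dev_def using assms(2) by auto
  then show ?thesis using assms unfolding vanishes_near_def using finite_subset by auto
qed

lemma vanishes_near_zero: "vanishes_near (\<lambda>p. 0) q"
  unfolding vanishes_near_def forest_dev_def by simp

lemma vanishes_near_sum:
  "finite G \<Longrightarrow> (\<And>e. e \<in> G \<Longrightarrow> vanishes_near (h e) q) \<Longrightarrow>
    vanishes_near (\<lambda>p. \<Sum>e\<in>G. (h e p :: 'k::comm_monoid_add)) q"
proof (induction G rule: finite_induct)
  case (insert a F)
  then have "vanishes_near (\<lambda>p. h a p + (\<Sum>e\<in>F. h e p)) q"
    by (auto intro: vanishes_near_map2[where F = "(+)"])
  then show ?case using insert by simp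
qed (simp add: vanishes_near_zero)

lemma vanishes_near_cong:
  assumes "\<And>r. f (q @ r) = g (q @ r)"
  shows "vanishes_near f q = vanishes_near g q"
proof -
  have "f q = g q" using assms[of "[]"] by simp
  moreover have "forest_dev f q 0 = forest_dev g q 0"
    unfolding forest_dev_def using assms[of "_ # _"] by simp
  ultimately show ?thesis unfolding vanishes_near_def by simp
qed

lemma vanishes_near_if_zero_below:
  assumes "f \<in> B_carrier" "\<And>r. q @ r \<in> forest_leaves \<Longrightarrow> f (q @ r) = 0"
  shows "vanishes_near f q"
proof -
  have "f q = 0"
    using assms(2)[of "[]"] B_carrier_vanish[OF assms(1), of q] by (cases "q \<in> forest_leaves") simp_all
  moreover have "forest_dev f q 0 = {}"
    unfolding forest_dev_def using assms(2) by fastforce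
  ultimately show ?thesis unfolding vanishes_near_def by simp
qed

lemma vanishes_near_off_cone:
  assumes "\<And>p. f p \<noteq> 0 \<Longrightarrow> \<exists>r. p = q0 @ r" and "\<not> (\<exists>r. q = q0 @ r)"
  shows "vanishes_near f q"
  using forest_dev_off_cone[OF assms] assms unfolding vanishes_near_def
  by (meson finite.emptyI finite_insert finite_subset)

lemma not_vanishes_near_inner:
  assumes q: "forest_rank q = Some b" and "\<not> zero_ord b" and "c \<noteq> 0"
    and fin: "finite (forest_dev f q c)"
  shows "\<not> vanishes_near f q"
proof
  assume "vanishes_near f q"
  then have f0: "finite (forest_dev f q 0)" unfolding vanishes_near_def by simp
  let ?C = "{i. \<exists>d. child_rank b i = Some d \<and> (LEAST x::'o. True) \<le> d}"
  have "?C \<subseteq> forest_dev f q c \<union> forest_dev f q 0"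
  proof
    fix i assume "i \<in> ?C"
    then obtain d where "child_rank b i = Some d" by blast
    then have "forest_rank (q @ [i]) = Some d" using forest_rank_snoc[OF q] by simp
    then obtain r where "(q @ [i]) @ r \<in> forest_leaves" using forest_node_has_leaf by blast
    then show "i \<in> forest_dev f q c \<union> forest_dev f q 0"
      unfolding forest_dev_def using \<open>c \<noteq> 0\<close> by auto
  qed
  moreover have "infinite ?C"
    using children_infinite Least_less_nonzero \<open>\<not> zero_ord b\<close> by blast
  ultimately show False using fin f0 finite_subset by blast
qed

lemma not_vanishes_near_const:
  assumes q: "forest_rank q = Some b" and c: "c \<noteq> 0"
    and fc: "\<And>r. q @ r \<in> forest_leaves \<Longrightarrow> f (q @ r) = c"
  shows "\<not> vanishes_near f q"
proof (cases "zero_ord b")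
  case True
  then have "q \<in> forest_leaves" using q unfolding forest_leaves_def by blast
  then show ?thesis using fc[of "[]"] c unfolding vanishes_near_def by simp
next
  case False
  have "forest_dev f q c = {}" unfolding forest_dev_def using fc by auto
  then show ?thesis using not_vanishes_near_inner[OF q False c] by simp
qed

lemma vanishing_ideal:
  "ideal {f \<in> B_carrier. \<forall>q. P q \<longrightarrow> vanishes_near f q} (B_ring \<alpha> n :: ('o pt \<Rightarrow> 'k::field) ring)"
  (is "ideal ?J _")
  unfolding B_ring_eq
proof (rule falg_ring_idealI, unfold snd_conv)
  show "cring (falg_ring (forest_leaves, B_carrier :: ('o pt \<Rightarrow> 'k) set))"
    using B_ring_cring[unfolded B_ring_eq] .
  show "?J \<subseteq> B_carrier" by blast
  show "(\<lambda>p. 0) \<in> ?J" using B_carrier_zero vanishes_near_zero by blast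
  fix f g :: "'o pt \<Rightarrow> 'k"
  show "f \<in> ?J \<Longrightarrow> g \<in> ?J \<Longrightarrow> (\<lambda>p. f p + g p) \<in> ?J"
    using B_carrier_map2[of f g "(+)"] vanishes_near_map2[of f _ g "(+)"] by auto
  show "f \<in> ?J \<Longrightarrow> (\<lambda>p. - f p) \<in> ?J"
    using B_carrier_map[of f uminus] vanishes_near_absorb[of f _ "\<lambda>x y. - x" f] by auto
  show "f \<in> ?J \<Longrightarrow> g \<in> B_carrier \<Longrightarrow> (\<lambda>p. f p * g p) \<in> ?J"
    using B_carrier_map2[of f g "(*)"] vanishes_near_absorb[of f _ "(*)" g] by auto
qed

lemma vanish_ge_ideal: "ideal (vanish_ge g :: ('o pt \<Rightarrow> 'k::field) set) (B_ring \<alpha> n)"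
  unfolding vanish_ge_def using vanishing_ideal[of "\<lambda>q. \<exists>b. forest_rank q = Some b \<and> g \<le> b"]
  by (simp add: conj_commute)

lemma vanish_gt_ideal: "ideal (vanish_gt g :: ('o pt \<Rightarrow> 'k::field) set) (B_ring \<alpha> n)"
  unfolding vanish_gt_def using vanishing_ideal[of "\<lambda>q. \<exists>b. forest_rank q = Some b \<and> g < b"]
  by (simp add: conj_commute)

lemma vanish_ge_zero: "(\<lambda>p. 0) \<in> vanish_ge g"
  unfolding vanish_ge_def using B_carrier_zero vanishes_near_zero by blast

lemma vanish_ge_mono: "g \<le> g' \<Longrightarrow> vanish_ge g \<subseteq> vanish_ge g'"
  unfolding vanish_ge_def by auto

lemma vanish_ge_subset_gt: "vanish_ge g \<subseteq> vanish_gt g"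
  unfolding vanish_ge_def vanish_gt_def by auto

lemma vanish_gt_top: "vanish_gt \<alpha> = B_carrier"
  unfolding vanish_gt_def using forest_rank_le by (auto simp: not_less[symmetric])

lemma vanish_ge_succ: "is_pred d g \<Longrightarrow> vanish_ge g = vanish_gt d"
  unfolding vanish_ge_def vanish_gt_def by (simp add: is_pred_le_iff_less)

lemma vanish_ge_zero_ord: "zero_ord g \<Longrightarrow> vanish_ge g = {\<lambda>p. 0}"
proof -
  assume g: "zero_ord g"
  have "f = (\<lambda>p. 0)" if f: "f \<in> vanish_ge g" for f
  proof
    fix p show "f p = 0"
    proof (cases "p \<in> forest_leaves")
      case True
      then obtain b where "forest_rank p = Some b" unfolding forest_leaves_def by blast
      moreover have "g \<le> b" using g unfolding zero_ord_def by (simp add: not_less[symmetric])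
      ultimately show ?thesis using f unfolding vanish_ge_def vanishes_near_def by blast
    next
      case False then show ?thesis using f B_carrier_vanish unfolding vanish_ge_def by blast
    qed
  qed
  then show ?thesis using vanish_ge_zero by blast
qed

lemma vanishes_near_below_nondev:
  assumes x: "x \<in> B_carrier" and i: "i \<notin> forest_dev x q 0"
  shows "vanishes_near x (q @ i # r)"
proof (rule vanishes_near_if_zero_below[OF x])
  fix s assume "(q @ i # r) @ s \<in> forest_leaves"
  then show "x ((q @ i # r) @ s) = 0" using i unfolding forest_dev_def by auto
qed

definition subtree_vanish_ge :: "('o pt \<Rightarrow> 'k::zero) \<Rightarrow> 'o pt \<Rightarrow> 'o \<Rightarrow> bool" where
  "subtree_vanish_ge x q \<delta> \<longleftrightarrow> (\<forall>r b. forest_rank (q @ r) = Some b \<and> \<delta> \<le> b \<longrightarrow> vanishes_near x (q @ r))"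

text \<open>Below a limit rank \<open>l\<close>, vanishing at all nodes of rank \<open>\<ge> l\<close> already forces vanishing at all
  nodes of some rank \<open>\<ge> \<delta>\<close>, \<open>\<delta> < l\<close>: near each node, \<open>x\<close> deviates from \<open>0\<close> along only finitely many
  children, and by induction each of these subtrees has its own bound below \<open>l\<close>.\<close>

lemma limit_subtree_bound:
  assumes x: "x \<in> B_carrier" and "\<not> zero_ord l" and limit: "\<not> (\<exists>p. is_pred p l)"
    and vanish: "\<And>q b. forest_rank q = Some b \<Longrightarrow> l \<le> b \<Longrightarrow> vanishes_near x q"
  shows "forest_rank q = Some \<rho> \<Longrightarrow> \<exists>\<delta><l. subtree_vanish_ge x q \<delta>"
proof (induction \<rho> arbitrary: q rule: less_induct)
  case (less \<rho> q)
  show ?case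
  proof (cases "\<rho> < l")
    case True
    then obtain \<delta> where "\<rho> < \<delta>" "\<delta> < l" using limit_dense[OF limit] by blast
    moreover have "b \<le> \<rho>" if "forest_rank (q @ r) = Some b" for r b
      using forest_rank_append_le[OF less.prems that] by simp
    ultimately show ?thesis unfolding subtree_vanish_ge_def by (meson leD le_less_trans)
  next
    case False
    then have "vanishes_near x q" using vanish less.prems by simp
    define D where "D = {i \<in> forest_dev x q 0. child_rank \<rho> i \<noteq> None}"
    have "finite D" using \<open>vanishes_near x q\<close> unfolding D_def vanishes_near_def by simp
    have "\<exists>\<delta><l. subtree_vanish_ge x (q @ [i]) \<delta>" if "i \<in> D" for i
    proof -
      from that have "child_rank \<rho> i \<noteq> None" unfolding D_def by simp
      then obtain \<rho>i where "child_rank \<rho> i = Some \<rho>i" by blast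
      then show ?thesis
        using less.IH[OF child_rank_less] forest_rank_snoc[OF less.prems] by metis
    qed
    then obtain d where d: "\<And>i. i \<in> D \<Longrightarrow> d i < l \<and> subtree_vanish_ge x (q @ [i]) (d i)" by metis
    obtain \<delta> where \<delta>: "\<delta> < l" "\<And>i. i \<in> D \<Longrightarrow> d i \<le> \<delta>"
      using finite_bound_below_nonzero[of l "d ` D"] \<open>\<not> zero_ord l\<close> \<open>finite D\<close> d by auto
    have "vanishes_near x (q @ r)" if r: "forest_rank (q @ r) = Some b" "\<delta> \<le> b" for r b
    proof (cases r)
      case Nil then show ?thesis using \<open>vanishes_near x q\<close> by simp
    next
      case (Cons i r')
      show ?thesis
      proof (cases "i \<in> forest_dev x q 0")
        case False then show ?thesis using vanishes_near_below_nondev[OF x False] Cons by simp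
      next
        case True
        have "forest_rank ((q @ [i]) @ r') = Some b" using r Cons by simp
        then obtain \<rho>i where "forest_rank (q @ [i]) = Some \<rho>i" using forest_rank_appendD by blast
        then have "i \<in> D" unfolding D_def using True forest_rank_snoc[OF less.prems] by simp
        then show ?thesis
          using d[of i] \<delta>(2)[of i] r Cons unfolding subtree_vanish_ge_def by (metis append_Cons append_assoc append_Nil order_trans)
      qed
    qed
    then show ?thesis using \<delta>(1) unfolding subtree_vanish_ge_def by blast
  qed
qed

lemma vanish_ge_limit:
  assumes "\<not> zero_ord l" and limit: "\<not> (\<exists>p. is_pred p l)"
  shows "vanish_ge l = \<Union> (vanish_ge ` {d. d < l})"
proof
  show "\<Union> (vanish_ge ` {d. d < l}) \<subseteq> vanish_ge l" by (rule UN_least) (simp add: vanish_ge_mono)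
  show "vanish_ge l \<subseteq> \<Union> (vanish_ge ` {d. d < l})"
  proof
    fix x assume x: "x \<in> vanish_ge l"
    then have xc: "x \<in> B_carrier" unfolding vanish_ge_def by blast
    have "\<And>q b. forest_rank q = Some b \<Longrightarrow> l \<le> b \<Longrightarrow> vanishes_near x q"
      using x unfolding vanish_ge_def by blast
    then have "\<exists>\<delta><l. subtree_vanish_ge x [Inl k] \<delta>" if "k < n" for k
      using limit_subtree_bound[OF xc assms] forest_rank_root[OF that] by blast
    then obtain d where d: "\<And>k. k < n \<Longrightarrow> d k < l \<and> subtree_vanish_ge x [Inl k] (d k)" by metis
    obtain \<delta> where \<delta>: "\<delta> < l" "\<And>k. k < n \<Longrightarrow> d k \<le> \<delta>"
      using finite_bound_below_nonzero[of l "d ` {..<n}"] assms(1) d by auto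
    have "vanishes_near x q" if qb: "forest_rank q = Some b" "\<delta> \<le> b" for q b
    proof -
      obtain k r where "k < n" "q = [Inl k] @ r" using forest_rank_root_prefix[OF qb(1)] by blast
      then show ?thesis using d \<delta>(2) qb unfolding subtree_vanish_ge_def by (meson order_trans)
    qed
    then show "x \<in> \<Union> (vanish_ge ` {d. d < l})" using \<delta>(1) xc unfolding vanish_ge_def by blast
  qed
qed

lemma finite_nonvanishing_subtree:
  assumes x: "x \<in> B_carrier" and vanish: "\<And>q b. forest_rank q = Some b \<Longrightarrow> g < b \<Longrightarrow> vanishes_near x q"
  shows "forest_rank q = Some \<rho> \<Longrightarrow> g \<le> \<rho> \<Longrightarrow>
    finite {r. forest_rank (q @ r) = Some g \<and> \<not> vanishes_near x (q @ r)}"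
proof (induction \<rho> arbitrary: q rule: less_induct)
  case (less \<rho> q)
  let ?N = "\<lambda>q. {r. forest_rank (q @ r) = Some g \<and> \<not> vanishes_near x (q @ r)}"
  show ?case
  proof (cases "g = \<rho>")
    case True
    have "?N q \<subseteq> {[]}" using forest_rank_append_le[OF less.prems(1)] True by fastforce
    then show ?thesis using finite_subset by blast
  next
    case False
    then have "g < \<rho>" using less.prems(2) by simp
    then have "vanishes_near x q" using vanish less.prems(1) by blast
    define D where "D = {i \<in> forest_dev x q 0. \<exists>\<rho>i. child_rank \<rho> i = Some \<rho>i \<and> g \<le> \<rho>i}"
    have "finite D" using \<open>vanishes_near x q\<close> unfolding D_def vanishes_near_def by simp
    have fin: "finite (?N (q @ [i]))" if iD: "i \<in> D" for i
    proof -
      obtain \<rho>i where c: "child_rank \<rho> i = Some \<rho>i" and "g \<le> \<rho>i" using iD unfolding D_def by blast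
      have "forest_rank (q @ [i]) = Some \<rho>i" using forest_rank_snoc[OF less.prems(1)] c by simp
      then show ?thesis using less.IH[OF child_rank_less[OF c]] \<open>g \<le> \<rho>i\<close> by blast
    qed
    have sub: "?N q \<subseteq> (\<Union>i\<in>D. (Cons i) ` ?N (q @ [i]))"
    proof
      fix r assume r: "r \<in> ?N q"
      then have "r \<noteq> []" using less.prems(1) \<open>g < \<rho>\<close> by auto
      then obtain i r' where ir: "r = i # r'" by (cases r) auto
      then have "i \<in> forest_dev x q 0" using r vanishes_near_below_nondev[OF x, of i q r'] by auto
      moreover obtain \<rho>i where \<rho>i: "forest_rank (q @ [i]) = Some \<rho>i" "path_rank \<rho>i r' = Some g"
        using forest_rank_appendD[of "q @ [i]" r' g] r ir by auto
      moreover have "g \<le> \<rho>i" using path_rank_le[OF \<rho>i(2)] .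
      ultimately have "i \<in> D" unfolding D_def using forest_rank_snoc[OF less.prems(1)] by auto
      then show "r \<in> (\<Union>i\<in>D. (Cons i) ` ?N (q @ [i]))" using r ir by auto
    qed
    have "finite (\<Union>i\<in>D. (Cons i) ` ?N (q @ [i]))"
      using \<open>finite D\<close> fin by (intro finite_UN_I finite_imageI)
    then show ?thesis using sub by (rule finite_subset[rotated])
  qed
qed

lemma finite_nonvanishing:
  assumes "x \<in> vanish_gt g" and "g \<le> \<alpha>"
  shows "finite {q. forest_rank q = Some g \<and> \<not> vanishes_near x q}"
proof -
  have x: "x \<in> B_carrier" and vanish: "\<And>q b. forest_rank q = Some b \<Longrightarrow> g < b \<Longrightarrow> vanishes_near x q"
    using assms(1) unfolding vanish_gt_def by blast+
  let ?N = "\<lambda>q. {r. forest_rank (q @ r) = Some g \<and> \<not> vanishes_near x (q @ r)}"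
  have "{q. forest_rank q = Some g \<and> \<not> vanishes_near x q} \<subseteq> (\<Union>k<n. (\<lambda>r. [Inl k] @ r) ` ?N [Inl k])"
    using forest_rank_root_prefix by fastforce
  moreover have "finite (?N [Inl k])" if "k < n" for k
    using finite_nonvanishing_subtree[OF x vanish forest_rank_root[OF that] assms(2)] .
  then have "finite (\<Union>k<n. (\<lambda>r. [Inl k] @ r) ` ?N [Inl k])" by (intro finite_UN_I finite_imageI) auto
  ultimately show ?thesis by (rule finite_subset)
qed

definition nodes_of_rank :: "'o \<Rightarrow> 'o pt set" where
  "nodes_of_rank g = {q. forest_rank q = Some g}"

definition cone_basis :: "'o \<Rightarrow> ('o pt \<Rightarrow> 'k::{zero,one}) set" where
  "cone_basis g = cone ` nodes_of_rank g"

text \<open>The value at the node \<open>q\<close> of the locally constant extension of \<open>x\<close>.\<close>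

definition germ :: "('o pt \<Rightarrow> 'k::zero) \<Rightarrow> 'o pt \<Rightarrow> 'k" where
  "germ x q = (SOME c. finite (forest_dev x q c) \<and> (q \<in> forest_leaves \<longrightarrow> c = x q))"

definition lin_comb :: "(('o pt \<Rightarrow> 'k) \<Rightarrow> 'k) \<Rightarrow> 'o pt \<Rightarrow> 'k::field" where
  "lin_comb g0 = (\<lambda>p. \<Sum>e\<in>{e. g0 e \<noteq> 0}. g0 e * e p)"

lemma germ_spec:
  assumes x: "x \<in> B_carrier" and q: "forest_rank q = Some b"
  shows "finite (forest_dev x q (germ x q)) \<and> (q \<in> forest_leaves \<longrightarrow> germ x q = x q)"
  unfolding germ_def
proof (rule someI_ex)
  show "\<exists>c. finite (forest_dev x q c) \<and> (q \<in> forest_leaves \<longrightarrow> c = x q)"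
  proof (cases "zero_ord b")
    case True
    have "forest_dev x q (x q) = {}"
      unfolding forest_dev_def forest_leaves_def using forest_rank_leaf_extend[OF q True] by auto
    then show ?thesis by (metis finite.emptyI)
  next
    case False
    then have "q \<notin> forest_leaves" using q unfolding forest_leaves_def by auto
    moreover obtain c where "finite (forest_dev x q c)" using x q False unfolding B_carrier_def by blast
    ultimately show ?thesis by blast
  qed
qed

lemma cone_same_rank:
  assumes "q \<in> nodes_of_rank g" "q' \<in> nodes_of_rank g" "p = q' @ r"
  shows "cone q p = (if q = q' \<and> p \<in> forest_leaves then 1 else 0)"
proof -
  have "(\<exists>r'. p = q @ r') = (q = q')"
  proof
    assume "\<exists>r'. p = q @ r'"
    then obtain r' where "q @ r' = q' @ r" using assms(3) by auto
    then show "q = q'" using same_rank_prefix_eq[of q g q' r' r] assms(1,2) unfolding nodes_of_rank_def by simp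
  qed (use assms(3) in auto)
  then show ?thesis unfolding cone_def by auto
qed

lemma inj_on_cone: "inj_on (cone :: 'o pt \<Rightarrow> 'o pt \<Rightarrow> 'k::zero_neq_one) (nodes_of_rank g)"
proof (rule inj_onI)
  fix q q' assume q: "q \<in> nodes_of_rank g" and q': "q' \<in> nodes_of_rank g"
    and eq: "(cone q :: 'o pt \<Rightarrow> 'k) = cone q'"
  obtain r where r: "q @ r \<in> forest_leaves" using forest_node_has_leaf q unfolding nodes_of_rank_def by blast
  then have "(cone q (q @ r) :: 'k) = 1" by (auto simp: cone_def)
  then have "(cone q' (q @ r) :: 'k) = 1" using eq by simp
  moreover have "(cone q' (q @ r) :: 'k) = (if q' = q \<and> q @ r \<in> forest_leaves then 1 else 0)"
    by (rule cone_same_rank[OF q' q]) simp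
  ultimately show "q = q'" by (simp split: if_splits)
qed

lemma cone_basis_finsuppD:
  assumes "g0 \<in> finsupp (cone_basis g :: ('o pt \<Rightarrow> 'k::zero_neq_one) set)"
  shows "finite {e. g0 e \<noteq> 0}" and "g0 e \<noteq> 0 \<Longrightarrow> \<exists>q\<in>nodes_of_rank g. e = cone q"
  using assms unfolding finsupp_def cone_basis_def by auto

lemma cone_basis_subset_B_carrier: "cone_basis g \<subseteq> B_carrier"
  unfolding cone_basis_def using cone_in_B_carrier by blast

lemma lin_comb_below:
  assumes g0: "g0 \<in> finsupp (cone_basis g :: ('o pt \<Rightarrow> 'k::field) set)" and q: "q \<in> nodes_of_rank g"
    and p: "p \<in> forest_leaves" "p = q @ r"
  shows "lin_comb g0 p = g0 (cone q)"
proof -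
  have "lin_comb g0 p = (\<Sum>e\<in>{e. g0 e \<noteq> 0}. if e = cone q then g0 e else 0)"
    unfolding lin_comb_def
  proof (rule sum.cong[OF refl])
    fix e assume "e \<in> {e. g0 e \<noteq> 0}"
    then obtain q' where q': "q' \<in> nodes_of_rank g" "e = cone q'"
      using cone_basis_finsuppD(2)[OF g0] by blast
    have "e p = (if q' = q then 1 else 0)" using cone_same_rank[OF q'(1) q p(2)] p(1) q'(2) by simp
    moreover have "(q' = q) = (e = cone q)" using inj_on_cone[of g] q q' unfolding inj_on_def by auto
    ultimately show "g0 e * e p = (if e = cone q then g0 e else 0)" by simp
  qed
  also have "\<dots> = g0 (cone q)"
    using cone_basis_finsuppD(1)[OF g0] by (simp add: sum.delta')
  finally show ?thesis .
qed

lemma lin_comb_outside: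
  assumes g0: "g0 \<in> finsupp (cone_basis g :: ('o pt \<Rightarrow> 'k::field) set)"
    and p: "\<not> (p \<in> forest_leaves \<and> (\<exists>q\<in>nodes_of_rank g. \<exists>r. p = q @ r))"
  shows "lin_comb g0 p = 0"
  unfolding lin_comb_def
proof (rule sum.neutral, rule ballI)
  fix e assume "e \<in> {e. g0 e \<noteq> 0}"
  then obtain q where "q \<in> nodes_of_rank g" "e = cone q"
    using cone_basis_finsuppD(2)[OF g0] by blast
  then have "e p = 0" using p by (auto simp: cone_def)
  then show "g0 e * e p = 0" by simp
qed

text \<open>Cones below distinct nodes of the same rank are disjoint.\<close>

lemma lin_comb_map2:
  assumes g0: "g0 \<in> finsupp (cone_basis g :: ('o pt \<Rightarrow> 'k::field) set)" and g1: "g1 \<in> finsupp (cone_basis g)"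
    and F: "(\<lambda>i. F (g0 i) (g1 i)) \<in> finsupp (cone_basis g)" "F 0 0 = 0"
  shows "lin_comb (\<lambda>i. F (g0 i) (g1 i)) = (\<lambda>p. F (lin_comb g0 p) (lin_comb g1 p))"
proof
  fix p
  show "lin_comb (\<lambda>i. F (g0 i) (g1 i)) p = F (lin_comb g0 p) (lin_comb g1 p)"
  proof (cases "p \<in> forest_leaves \<and> (\<exists>q\<in>nodes_of_rank g. \<exists>r. p = q @ r)")
    case True
    then obtain q r where "p \<in> forest_leaves" "q \<in> nodes_of_rank g" "p = q @ r" by blast
    then show ?thesis using lin_comb_below[OF g0] lin_comb_below[OF g1] lin_comb_below[OF F(1)] by simp
  next
    case False
    then show ?thesis using lin_comb_outside[OF g0] lin_comb_outside[OF g1] lin_comb_outside[OF F(1)] F(2)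
      by simp
  qed
qed

lemma lin_comb_in_B_carrier:
  assumes "g0 \<in> finsupp (cone_basis g :: ('o pt \<Rightarrow> 'k::field) set)"
  shows "lin_comb g0 \<in> B_carrier"
  unfolding lin_comb_def
  using cone_basis_finsuppD[OF assms] cone_in_B_carrier B_carrier_map[of _ "\<lambda>y. g0 _ * y"]
  by (intro B_carrier_sum) auto

lemma smult_cone_in_vanish_gt:
  assumes q: "q \<in> nodes_of_rank g"
  shows "(\<lambda>p. c * cone q p :: 'k::field) \<in> vanish_gt g"
  unfolding vanish_gt_def
proof (intro CollectI conjI allI impI)
  show "(\<lambda>p. c * cone q p) \<in> B_carrier"
    using B_carrier_map[OF cone_in_B_carrier, where F = "\<lambda>y. c * y"] by simp
  fix q' b assume h: "forest_rank q' = Some b \<and> g < b"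
  have "\<not> (\<exists>r. q' = q @ r)"
  proof
    assume "\<exists>r. q' = q @ r"
    then have "b \<le> g" using forest_rank_append_le[of q g _ b] q h unfolding nodes_of_rank_def by auto
    then show False using h leD by blast
  qed
  then show "vanishes_near (\<lambda>p. c * cone q p) q'"
    by (rule vanishes_near_off_cone[rotated]) (auto simp: cone_def split: if_splits)
qed

lemma lin_comb_in_vanish_gt:
  assumes g0: "g0 \<in> finsupp (cone_basis g :: ('o pt \<Rightarrow> 'k::field) set)"
  shows "lin_comb g0 \<in> vanish_gt g"
proof -
  have "(\<lambda>p. g0 e * e p) \<in> vanish_gt g" if "g0 e \<noteq> 0" for e
    using cone_basis_finsuppD(2)[OF g0 that] smult_cone_in_vanish_gt by blast
  then show ?thesis
    unfolding vanish_gt_def mem_Collect_eq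
    using lin_comb_in_B_carrier[OF g0] cone_basis_finsuppD(1)[OF g0]
    by (auto simp: lin_comb_def vanish_gt_def intro!: vanishes_near_sum)
qed

lemma vanishes_near_iff_germ_eq_0:
  assumes x: "x \<in> B_carrier" and q: "forest_rank q = Some b"
  shows "vanishes_near x q \<longleftrightarrow> germ x q = 0"
proof (cases "zero_ord b")
  case True
  then have "q \<in> forest_leaves" using q unfolding forest_leaves_def by blast
  moreover have "forest_dev x q 0 = {}"
    unfolding forest_dev_def forest_leaves_def using forest_rank_leaf_extend[OF q True] by auto
  ultimately show ?thesis using germ_spec[OF x q] unfolding vanishes_near_def by auto
next
  case False
  then have "x q = 0" using B_carrier_vanish[OF x] q unfolding forest_leaves_def by auto
  then show ?thesis
    using germ_spec[OF x q] not_vanishes_near_inner[OF q False, of "germ x q" x]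
    unfolding vanishes_near_def by auto
qed

lemma vanishes_near_diff_germ:
  fixes x :: "'o pt \<Rightarrow> 'k::ab_group_add"
  assumes x: "x \<in> B_carrier" and q: "forest_rank q = Some b"
  shows "vanishes_near (\<lambda>p. x p - (if p \<in> forest_leaves then germ x q else 0)) q"
  unfolding vanishes_near_def
proof
  show "x q - (if q \<in> forest_leaves then germ x q else 0) = 0"
    using germ_spec[OF x q] B_carrier_vanish[OF x, of q] by auto
  have "forest_dev (\<lambda>p. x p - (if p \<in> forest_leaves then germ x q else 0)) q 0 \<subseteq> forest_dev x q (germ x q)"
    unfolding forest_dev_def by auto
  then show "finite (forest_dev (\<lambda>p. x p - (if p \<in> forest_leaves then germ x q else 0)) q 0)"
    using germ_spec[OF x q] finite_subset by blast
qed

lemma cone_notin_vanish_ge: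
  assumes "q \<in> nodes_of_rank g"
  shows "(cone q :: 'o pt \<Rightarrow> 'k::field) \<notin> vanish_ge g"
proof
  have qg: "forest_rank q = Some g" using assms by (simp add: nodes_of_rank_def)
  assume "(cone q :: 'o pt \<Rightarrow> 'k) \<in> vanish_ge g"
  then have "vanishes_near (cone q :: 'o pt \<Rightarrow> 'k) q" using qg unfolding vanish_ge_def by blast
  moreover have "\<not> vanishes_near (cone q :: 'o pt \<Rightarrow> 'k) q"
    by (rule not_vanishes_near_const[where c = 1, OF qg]) (auto simp: cone_def)
  ultimately show False by simp
qed

lemma cone_mult_congruent:
  assumes q: "q \<in> nodes_of_rank g" and x: "x \<in> B_carrier"
  shows "(\<lambda>p. cone q p * x p - germ x q * cone q p :: 'k::field) \<in> vanish_ge g"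
  unfolding vanish_ge_def
proof (intro CollectI conjI allI impI)
  have qg: "forest_rank q = Some g" using q unfolding nodes_of_rank_def by simp
  have c1: "(\<lambda>p. cone q p * x p) \<in> B_carrier" using B_carrier_map2[OF cone_in_B_carrier x, of "(*)"] by simp
  have c2: "(\<lambda>p. germ x q * cone q p) \<in> B_carrier"
    using B_carrier_map[OF cone_in_B_carrier, of "\<lambda>y. germ x q * y"] by simp
  show "(\<lambda>p. cone q p * x p - germ x q * cone q p) \<in> B_carrier"
    using B_carrier_map2[OF c1 c2, of "(-)"] by simp
  fix q' b assume q': "forest_rank q' = Some b \<and> g \<le> b"
  show "vanishes_near (\<lambda>p. cone q p * x p - germ x q * cone q p) q'"
  proof (cases "\<exists>r. q' = q @ r")
    case True
    then obtain r where r: "q' = q @ r" by blast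
    have "r = []"
    proof (rule ccontr)
      assume "r \<noteq> []"
      then have "b < g" using forest_rank_append_le[OF qg, of r b] q' r by simp
      then show False using q' leD by blast
    qed
    then have "q' = q" using r by simp
    have "vanishes_near (\<lambda>p. cone q p * x p - germ x q * cone q p) q =
        vanishes_near (\<lambda>p. x p - (if p \<in> forest_leaves then germ x q else 0)) q"
      by (rule vanishes_near_cong) (use B_carrier_vanish[OF x] in \<open>auto simp: cone_def\<close>)
    then show ?thesis using vanishes_near_diff_germ[OF x qg] \<open>q' = q\<close> by simp
  next
    case False
    then show ?thesis by (rule vanishes_near_off_cone[rotated]) (auto simp: cone_def split: if_splits)
  qed
qed

lemma lin_comb_congruent:
  assumes x: "x \<in> vanish_gt g" and "g \<le> \<alpha>"
  shows "\<exists>g0 \<in> finsupp (cone_basis g :: ('o pt \<Rightarrow> 'k::field) set). (\<lambda>p. x p - lin_comb g0 p) \<in> vanish_ge g"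
proof -
  have xc: "x \<in> B_carrier" using x unfolding vanish_gt_def by blast
  define g0 :: "('o pt \<Rightarrow> 'k) \<Rightarrow> 'k" where
    "g0 e = (if e \<in> cone_basis g then germ x (the_inv_into (nodes_of_rank g) cone e) else 0)" for e
  have g0_cone: "g0 (cone q) = germ x q" if "q \<in> nodes_of_rank g" for q
    using that the_inv_into_f_f[OF inj_on_cone[where 'k = 'k] that] unfolding g0_def cone_basis_def by simp
  have "{e. g0 e \<noteq> 0} \<subseteq> cone ` {q. forest_rank q = Some g \<and> \<not> vanishes_near x q}"
  proof
    fix e assume "e \<in> {e. g0 e \<noteq> 0}"
    then obtain q where "q \<in> nodes_of_rank g" "e = cone q" "g0 e \<noteq> 0"
      unfolding g0_def cone_basis_def by (auto split: if_splits)
    then show "e \<in> cone ` {q. forest_rank q = Some g \<and> \<not> vanishes_near x q}"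
      using vanishes_near_iff_germ_eq_0[OF xc] g0_cone unfolding nodes_of_rank_def by auto
  qed
  then have "finite {e. g0 e \<noteq> 0}" using finite_nonvanishing[OF assms] finite_subset by blast
  then have g0: "g0 \<in> finsupp (cone_basis g)" unfolding finsupp_def g0_def by auto
  have "vanishes_near (\<lambda>p. x p - lin_comb g0 p) q'" if q': "forest_rank q' = Some b'" "g \<le> b'" for q' b'
  proof (cases "g < b'")
    case True
    then have "vanishes_near x q'" "vanishes_near (lin_comb g0) q'"
      using x lin_comb_in_vanish_gt[OF g0] q'(1) unfolding vanish_gt_def by blast+
    then show ?thesis by (rule vanishes_near_map2) simp
  next
    case False
    then have q'N: "q' \<in> nodes_of_rank g" using q' unfolding nodes_of_rank_def by simp
    have "vanishes_near (\<lambda>p. x p - lin_comb g0 p) q' =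
        vanishes_near (\<lambda>p. x p - (if p \<in> forest_leaves then germ x q' else 0)) q'"
    proof (rule vanishes_near_cong)
      fix r
      show "x (q' @ r) - lin_comb g0 (q' @ r) = x (q' @ r) - (if q' @ r \<in> forest_leaves then germ x q' else 0)"
        using lin_comb_below[OF g0 q'N, of "q' @ r" r] lin_comb_outside[OF g0, of "q' @ r"] g0_cone[OF q'N]
        by (cases "q' @ r \<in> forest_leaves") (use q'N in auto)
    qed
    then show ?thesis using vanishes_near_diff_germ[OF xc q'(1)] by simp
  qed
  moreover have "(\<lambda>p. x p - lin_comb g0 p) \<in> B_carrier"
    using xc lin_comb_in_B_carrier[OF g0] by (rule B_carrier_map2) simp
  ultimately show ?thesis using g0 unfolding vanish_ge_def by blast
qed

lemma lin_comb_inj: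
  assumes g0: "g0 \<in> finsupp (cone_basis g :: ('o pt \<Rightarrow> 'k::field) set)" and g1: "g1 \<in> finsupp (cone_basis g)"
    and diff: "(\<lambda>p. lin_comb g0 p - lin_comb g1 p) \<in> vanish_ge g"
  shows "g0 = g1"
proof (rule ccontr)
  assume "g0 \<noteq> g1"
  then obtain e where e: "g0 e - g1 e \<noteq> 0" by (auto simp: fun_eq_iff)
  define k where "k = (\<lambda>i. g0 i - g1 i)"
  have kf: "k \<in> finsupp (cone_basis g)" unfolding k_def by (rule finsupp_diff[OF g0 g1])
  have lk: "lin_comb k = (\<lambda>p. lin_comb g0 p - lin_comb g1 p)"
    unfolding k_def by (rule lin_comb_map2[OF g0 g1 finsupp_diff[OF g0 g1]]) simp
  obtain q where q: "q \<in> nodes_of_rank g" "e = cone q"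
    using cone_basis_finsuppD(2)[OF kf] e unfolding k_def by blast
  then have qg: "forest_rank q = Some g" unfolding nodes_of_rank_def by simp
  have "\<not> vanishes_near (lin_comb k) q"
  proof (rule not_vanishes_near_const[OF qg])
    show "k e \<noteq> 0" using e unfolding k_def by simp
    fix r assume "q @ r \<in> forest_leaves"
    then show "lin_comb k (q @ r) = k e" using lin_comb_below[OF kf q(1)] q(2) by simp
  qed
  moreover have "vanishes_near (lin_comb k) q" using diff qg unfolding lk vanish_ge_def by blast
  ultimately show False by simp
qed

text \<open>Outside \<open>vanish_gt g\<close>, some node \<open>q\<close> of rank \<open>> g\<close> carries a nonzero value \<open>c\<close> of \<open>x\<close>; the
  cone below a child of \<open>q\<close> of rank \<open>\<ge> g\<close> along which \<open>x\<close> is constantly \<open>c\<close> splits \<open>x\<close>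
  into two parts that both keep a nonzero value at a node of rank \<open>\<ge> g\<close>.\<close>

lemma splitting_idempotent:
  assumes x: "x \<in> B_carrier" and nx: "x \<notin> vanish_gt g"
  shows "\<exists>z\<in>B_carrier. (\<lambda>p. z p * z p) = (z :: 'o pt \<Rightarrow> 'k::field)
            \<and> (\<lambda>p. x p * z p) \<notin> vanish_ge g
            \<and> (\<lambda>p. x p * ((if p \<in> forest_leaves then 1 else 0) - z p)) \<notin> vanish_ge g"
proof -
  obtain q b where q: "forest_rank q = Some b" "g < b" "\<not> vanishes_near x q"
    using x nx unfolding vanish_gt_def by blast
  have "\<not> zero_ord b" using q(2) unfolding zero_ord_def by blast
  define c where "c = germ x q"
  have "finite (forest_dev x q c)" using germ_spec[OF x q(1)] unfolding c_def by blast
  have "c \<noteq> 0" using vanishes_near_iff_germ_eq_0[OF x q(1)] q(3) unfolding c_def by blast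
  have "infinite {i. \<exists>d. child_rank b i = Some d \<and> g \<le> d}" by (rule children_infinite[OF q(2)])
  then have "\<not> {i. \<exists>d. child_rank b i = Some d \<and> g \<le> d} \<subseteq> forest_dev x q c"
    using \<open>finite (forest_dev x q c)\<close> finite_subset by blast
  then obtain i d where i: "child_rank b i = Some d" "g \<le> d" "i \<notin> forest_dev x q c" by blast
  have qi: "forest_rank (q @ [i]) = Some d" using forest_rank_snoc[OF q(1)] i(1) by simp
  define z :: "'o pt \<Rightarrow> 'k" where "z = cone (q @ [i])"
  have x_below_i: "x (q @ i # r) = c" if "q @ i # r \<in> forest_leaves" for r
    using i(3) that unfolding forest_dev_def by blast
  have "\<not> vanishes_near (\<lambda>p. x p * z p) (q @ [i])"
  proof (rule not_vanishes_near_const[OF qi \<open>c \<noteq> 0\<close>])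
    fix r assume "(q @ [i]) @ r \<in> forest_leaves"
    then show "x ((q @ [i]) @ r) * z ((q @ [i]) @ r) = c" using x_below_i[of r] by (simp add: z_def cone_def)
  qed
  then have "(\<lambda>p. x p * z p) \<notin> vanish_ge g" using qi i(2) unfolding vanish_ge_def by blast
  moreover have "\<not> vanishes_near (\<lambda>p. x p * ((if p \<in> forest_leaves then 1 else 0) - z p)) q"
  proof (rule not_vanishes_near_inner[OF q(1) \<open>\<not> zero_ord b\<close> \<open>c \<noteq> 0\<close>])
    have "forest_dev (\<lambda>p. x p * ((if p \<in> forest_leaves then 1 else 0) - z p)) q c \<subseteq> insert i (forest_dev x q c)"
      unfolding forest_dev_def z_def cone_def by auto
    then show "finite (forest_dev (\<lambda>p. x p * ((if p \<in> forest_leaves then 1 else 0) - z p)) q c)"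
      using \<open>finite (forest_dev x q c)\<close> finite_subset by blast
  qed
  then have "(\<lambda>p. x p * ((if p \<in> forest_leaves then 1 else 0) - z p)) \<notin> vanish_ge g"
    using q(1,2) unfolding vanish_ge_def by fastforce
  moreover have "(\<lambda>p. z p * z p) = z" unfolding z_def by (rule cone_idem)
  moreover have "z \<in> B_carrier" unfolding z_def by (rule cone_in_B_carrier)
  ultimately show ?thesis by blast
qed

lemma cone_basis_scalar:
  assumes "e \<in> cone_basis g" and "x \<in> carrier (B_ring \<alpha> n)"
  shows "\<exists>c. e \<otimes>\<^bsub>B_ring \<alpha> n\<^esub> x \<ominus>\<^bsub>B_ring \<alpha> n\<^esub> falg_smult c e \<in> (vanish_ge g :: ('o pt \<Rightarrow> 'k::field) set)"
proof -
  have x: "x \<in> B_carrier" using assms(2) by (simp add: B_ring_simps)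
  obtain q where q: "q \<in> nodes_of_rank g" "e = cone q" using assms(1) unfolding cone_basis_def by blast
  have c1: "(\<lambda>p. cone q p * x p) \<in> B_carrier" using B_carrier_map2[OF cone_in_B_carrier x, of "(*)"] by simp
  have c2: "(\<lambda>p. germ x q * cone q p) \<in> B_carrier"
    using B_carrier_map[OF cone_in_B_carrier, of "\<lambda>y. germ x q * y"] by simp
  have "e \<otimes>\<^bsub>B_ring \<alpha> n\<^esub> x \<ominus>\<^bsub>B_ring \<alpha> n\<^esub> falg_smult (germ x q) e
      = (\<lambda>p. cone q p * x p - germ x q * cone q p)"
    using B_ring_minus[OF c1 c2] q(2) by (simp add: B_ring_simps falg_smult_def)
  then show ?thesis using cone_mult_congruent[OF q(1) x] by metis
qed

lemma lin_comb_eq_finsum: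
  assumes "g0 \<in> finsupp (cone_basis g)"
  shows "lin_comb g0 = finsum (B_ring \<alpha> n :: ('o pt \<Rightarrow> 'k::field) ring) (\<lambda>e. falg_smult (g0 e) e) {e. g0 e \<noteq> 0}"
proof -
  have "{e. g0 e \<noteq> 0} \<subseteq> B_carrier" "finite {e. g0 e \<noteq> 0}"
    using assms cone_basis_subset_B_carrier unfolding finsupp_def by auto
  then show ?thesis
    using B_carrier_map[of _ "\<lambda>y. g0 _ * y"]
    by (subst B_ring_finsum) (auto simp: lin_comb_def falg_smult_def)
qed

lemma vanish_gt_span:
  assumes "g \<le> \<alpha>" and x: "x \<in> vanish_gt g"
  shows "\<exists>G c. finite G \<and> G \<subseteq> cone_basis g \<and>
    x \<ominus>\<^bsub>B_ring \<alpha> n\<^esub> finsum (B_ring \<alpha> n) (\<lambda>e. falg_smult (c e) e) G \<in> (vanish_ge g :: ('o pt \<Rightarrow> 'k::field) set)"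
proof -
  obtain g0 where g0: "g0 \<in> finsupp (cone_basis g)" "(\<lambda>p. x p - lin_comb g0 p) \<in> vanish_ge g"
    using lin_comb_congruent[OF x assms(1)] by blast
  moreover have "x \<in> B_carrier" using x unfolding vanish_gt_def by blast
  ultimately have "x \<ominus>\<^bsub>B_ring \<alpha> n\<^esub> finsum (B_ring \<alpha> n) (\<lambda>e. falg_smult (g0 e) e) {e. g0 e \<noteq> 0} \<in> vanish_ge g"
    using B_ring_minus[OF _ lin_comb_in_B_carrier[OF g0(1)]] lin_comb_eq_finsum[OF g0(1)] by simp
  moreover have "finite {e. g0 e \<noteq> 0}" "{e. g0 e \<noteq> 0} \<subseteq> cone_basis g"
    using g0(1) unfolding finsupp_def by auto
  ultimately show ?thesis by blast
qed

lemma vanish_gt_split: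
  assumes "x \<in> carrier (B_ring \<alpha> n)" "x \<notin> vanish_gt g"
  shows "\<exists>z\<in>carrier (B_ring \<alpha> n). z \<otimes>\<^bsub>B_ring \<alpha> n\<^esub> z = z \<and>
    x \<otimes>\<^bsub>B_ring \<alpha> n\<^esub> z \<notin> vanish_ge g \<and>
    x \<otimes>\<^bsub>B_ring \<alpha> n\<^esub> (\<one>\<^bsub>B_ring \<alpha> n\<^esub> \<ominus>\<^bsub>B_ring \<alpha> n\<^esub> z) \<notin> (vanish_ge g :: ('o pt \<Rightarrow> 'k::field) set)"
proof -
  have "x \<in> B_carrier" using assms(1) by (simp add: B_ring_simps)
  then obtain z where z: "z \<in> B_carrier" "(\<lambda>p. z p * z p) = z" "(\<lambda>p. x p * z p) \<notin> vanish_ge g"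
      "(\<lambda>p. x p * ((if p \<in> forest_leaves then 1 else 0) - z p)) \<notin> vanish_ge g"
    using splitting_idempotent assms(2) by blast
  have "\<one>\<^bsub>B_ring \<alpha> n\<^esub> \<ominus>\<^bsub>B_ring \<alpha> n\<^esub> z = (\<lambda>p. (if p \<in> forest_leaves then 1 else 0) - z p)"
    using B_ring_minus[OF B_carrier_const z(1)] by (simp add: B_ring_simps)
  then show ?thesis using z by (intro bexI[of _ z]) (simp_all add: B_ring_simps)
qed

lemma socle_step_vanish_ge:
  assumes "g \<le> \<alpha>"
  shows "socle_step (B_ring \<alpha> n :: ('o pt \<Rightarrow> 'k::field) ring) (vanish_ge g) = vanish_gt g"
proof -
  interpret kalg_ideal "vanish_ge g" "B_ring \<alpha> n :: ('o pt \<Rightarrow> 'k) ring" falg_smult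
    by (rule kalg_idealI[OF vanish_ge_ideal B_ring_kalg])
  show ?thesis
  proof (rule socle_step_eqI[where \<Lambda> = "cone_basis g"])
    show "cone_basis g \<subseteq> (vanish_gt g :: ('o pt \<Rightarrow> 'k) set)"
      using smult_cone_in_vanish_gt[where c = 1] unfolding cone_basis_def by fastforce
    show "e \<notin> vanish_ge g" if "e \<in> cone_basis g" for e :: "'o pt \<Rightarrow> 'k"
      using cone_notin_vanish_ge that unfolding cone_basis_def by blast
  qed (use vanish_gt_ideal vanish_ge_subset_gt cone_basis_scalar vanish_gt_span[OF assms] vanish_gt_split in auto)
qed

lemma soc_seq_vanish_ge:
  "g \<le> \<alpha> \<Longrightarrow> soc_seq (B_ring \<alpha> n :: ('o pt \<Rightarrow> 'k::field) ring) g = vanish_ge g"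
proof (induction g rule: less_induct)
  case (less g)
  let ?B = "B_ring \<alpha> n :: ('o pt \<Rightarrow> 'k) ring"
  show ?case
  proof (cases "\<exists>\<gamma>. \<gamma> < g")
    case False
    then have "zero_ord g" unfolding zero_ord_def by simp
    then show ?thesis using False by (subst soc_seq_unfold) (simp add: vanish_ge_zero_ord B_ring_simps)
  next
    case nonzero: True
    show ?thesis
    proof (cases "\<exists>\<gamma>. is_pred \<gamma> g")
      case True
      then obtain d where d: "is_pred d g" by blast
      then have "d < g" unfolding is_pred_def by simp
      have "soc_seq ?B g = socle_step ?B (soc_seq ?B d)"
        using nonzero True The_is_pred[OF d] by (subst soc_seq_unfold) simp
      also have "\<dots> = socle_step ?B (vanish_ge d)" using less.IH[OF \<open>d < g\<close>] \<open>d < g\<close> less.prems by simp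
      also have "\<dots> = vanish_gt d" using \<open>d < g\<close> less.prems by (intro socle_step_vanish_ge) simp
      also have "\<dots> = vanish_ge g" by (rule vanish_ge_succ[OF d, symmetric])
      finally show ?thesis .
    next
      case False
      have "soc_seq ?B g = \<Union> (soc_seq ?B ` {\<gamma>. \<gamma> < g})"
        using nonzero False by (subst soc_seq_unfold) simp
      also have "\<dots> = \<Union> (vanish_ge ` {\<gamma>. \<gamma> < g})" using less.IH less.prems by simp
      also have "\<dots> = vanish_ge g"
        using nonzero False by (intro vanish_ge_limit[symmetric]) (auto simp: zero_ord_def)
      finally show ?thesis .
    qed
  qed
qed

lemma layer_iso_cone_basis:
  assumes "g \<le> \<alpha>"
  shows "layer_iso (B_ring \<alpha> n :: ('o pt \<Rightarrow> 'k::field) ring) falg_smult g (cone_basis g)"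
proof -
  interpret kalg_ideal "vanish_ge g" "B_ring \<alpha> n :: ('o pt \<Rightarrow> 'k) ring" falg_smult
    by (rule kalg_idealI[OF vanish_ge_ideal B_ring_kalg])
  note L_carrier = lin_comb_in_B_carrier[where 'k = 'k]
  show ?thesis
  proof (rule layer_isoI[where L = lin_comb])
    show "soc_seq (B_ring \<alpha> n) g = vanish_ge g" by (rule soc_seq_vanish_ge[OF assms])
    show "socle_step (B_ring \<alpha> n) (vanish_ge g) = vanish_gt g" by (rule socle_step_vanish_ge[OF assms])
    show "ideal (vanish_gt g) (B_ring \<alpha> n)" by (rule vanish_gt_ideal)
    show "\<And>g0. g0 \<in> finsupp (cone_basis g) \<Longrightarrow> lin_comb g0 \<in> vanish_gt g"
      by (rule lin_comb_in_vanish_gt)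
  next
    fix x :: "'o pt \<Rightarrow> 'k" assume x: "x \<in> vanish_gt g"
    then have xc: "x \<in> B_carrier" unfolding vanish_gt_def by blast
    obtain g0 where g0: "g0 \<in> finsupp (cone_basis g)" "(\<lambda>p. x p - lin_comb g0 p) \<in> vanish_ge g"
      using lin_comb_congruent[OF x assms] by blast
    moreover have "x \<ominus>\<^bsub>B_ring \<alpha> n\<^esub> lin_comb g0 = (\<lambda>p. x p - lin_comb g0 p)"
      by (rule B_ring_minus[OF xc L_carrier[OF g0(1)]])
    ultimately show "\<exists>g0\<in>finsupp (cone_basis g). x \<ominus>\<^bsub>B_ring \<alpha> n\<^esub> lin_comb g0 \<in> vanish_ge g"
      by (intro bexI[of _ g0]) simp_all
  next
    fix g0 g1 :: "('o pt \<Rightarrow> 'k) \<Rightarrow> 'k"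
    assume g0: "g0 \<in> finsupp (cone_basis g)" and g1: "g1 \<in> finsupp (cone_basis g)"
    show "lin_comb g0 \<ominus>\<^bsub>B_ring \<alpha> n\<^esub> lin_comb g1 \<in> vanish_ge g \<Longrightarrow> g0 = g1"
      using lin_comb_inj[OF g0 g1] B_ring_minus[OF L_carrier[OF g0] L_carrier[OF g1]] by simp
    show "lin_comb (\<lambda>i. g0 i + g1 i) = lin_comb g0 \<oplus>\<^bsub>B_ring \<alpha> n\<^esub> lin_comb g1"
      by (simp add: B_ring_simps lin_comb_map2[OF g0 g1 finsupp_add[OF g0 g1]])
    show "lin_comb (\<lambda>i. g0 i * g1 i) = lin_comb g0 \<otimes>\<^bsub>B_ring \<alpha> n\<^esub> lin_comb g1"
      by (simp add: B_ring_simps lin_comb_map2[OF g0 g1 finsupp_mult[OF g0, of g1]])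
  next
    fix g0 :: "('o pt \<Rightarrow> 'k) \<Rightarrow> 'k" and c assume g0: "g0 \<in> finsupp (cone_basis g)"
    show "lin_comb (\<lambda>i. c * g0 i) = falg_smult c (lin_comb g0)"
      using lin_comb_map2[OF g0 g0, of "\<lambda>a b. c * a"] finsupp_smult[OF g0, of c]
      by (simp add: falg_smult_def)
  qed
qed

lemma nodes_of_rank_top: "nodes_of_rank \<alpha> = (\<lambda>k. [Inl k]) ` {..<n}"
proof
  show "nodes_of_rank \<alpha> \<subseteq> (\<lambda>k. [Inl k]) ` {..<n}"
  proof
    fix q assume "q \<in> nodes_of_rank \<alpha>"
    then obtain k q' where q: "q = Inl k # q'" "k < n" "path_rank \<alpha> q' = Some \<alpha>"
      unfolding nodes_of_rank_def by (cases q) (auto dest!: forest_rank_Cons_Some)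
    then have "q' = []" using path_rank_Cons_less by (cases q') fastforce+
    then show "q \<in> (\<lambda>k. [Inl k]) ` {..<n}" using q by simp
  qed
  show "(\<lambda>k. [Inl k]) ` {..<n} \<subseteq> nodes_of_rank \<alpha>"
    unfolding nodes_of_rank_def using forest_rank_root by auto
qed

lemma cone_basis_nonempty:
  assumes "0 < n" "g \<le> \<alpha>"
  shows "cone_basis g \<noteq> {}"
proof -
  obtain r where "path_rank \<alpha> r = Some g" using path_rank_reach[OF assms(2)] by blast
  then have "Inl 0 # r \<in> nodes_of_rank g" using assms(1) by (simp add: nodes_of_rank_def forest_rank_Inl)
  then show ?thesis unfolding cone_basis_def by blast
qed

lemma cone_basis_countable: "countable_ord \<alpha> \<Longrightarrow> countable (cone_basis g)"
proof -
  assume "countable_ord \<alpha>"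
  then have "countable (lists (range Inl \<union> Inr ` {\<gamma>. \<gamma> < \<alpha>}) :: (nat + 'o) list set)"
    unfolding countable_ord_def by auto
  moreover have "nodes_of_rank g \<subseteq> lists (range Inl \<union> Inr ` {\<gamma>. \<gamma> < \<alpha>})"
  proof
    fix q assume "q \<in> nodes_of_rank g"
    then obtain k q' where q: "q = Inl k # q'" "path_rank \<alpha> q' = Some g"
      unfolding nodes_of_rank_def by (cases q) (auto dest!: forest_rank_Cons_Some)
    then show "q \<in> lists (range Inl \<union> Inr ` {\<gamma>. \<gamma> < \<alpha>})" using path_rank_set[OF q(2)] by auto
  qed
  ultimately show ?thesis unfolding cone_basis_def using countable_subset by blast
qed

lemma cone_basis_top_card: "finite (cone_basis \<alpha> :: ('o pt \<Rightarrow> 'k::field) set) \<and> card (cone_basis \<alpha> :: ('o pt \<Rightarrow> 'k) set) = n"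
  unfolding cone_basis_def nodes_of_rank_top
  using card_image[OF inj_on_cone[where 'k = 'k, of \<alpha>, unfolded nodes_of_rank_top]]
  by (simp add: card_image inj_on_def)

lemma B_ring_loewy_length:
  assumes "0 < n"
  shows "loewy_length_succ (B_ring \<alpha> n :: ('o pt \<Rightarrow> 'k::field) ring) \<alpha>"
proof -
  have seq: "soc_seq (B_ring \<alpha> n :: ('o pt \<Rightarrow> 'k) ring) \<alpha> = vanish_ge \<alpha>"
    by (rule soc_seq_vanish_ge) simp
  have "[Inl 0] \<in> nodes_of_rank \<alpha>" unfolding nodes_of_rank_def using forest_rank_root assms by simp
  then have "(cone [Inl 0] :: 'o pt \<Rightarrow> 'k) \<notin> vanish_ge \<alpha>" by (rule cone_notin_vanish_ge)
  then have "vanish_ge \<alpha> \<noteq> (B_carrier :: ('o pt \<Rightarrow> 'k) set)" using cone_in_B_carrier by blast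
  then show ?thesis
    unfolding loewy_length_succ_def seq socle_step_vanish_ge[OF order_refl] vanish_gt_top
    by (simp add: B_ring_simps)
qed

lemma B_ring_in_RK:
  assumes "0 < n"
  shows "in_RK (B_ring \<alpha> n :: ('o pt \<Rightarrow> 'k::field) ring) falg_smult \<alpha>"
proof -
  have "\<exists>\<Lambda>. \<Lambda> \<noteq> {} \<and> layer_iso (B_ring \<alpha> n :: ('o pt \<Rightarrow> 'k) ring) falg_smult \<beta> \<Lambda>" if "\<beta> \<le> \<alpha>" for \<beta>
    using cone_basis_nonempty[OF assms that] layer_iso_cone_basis[OF that] by blast
  then show ?thesis
    unfolding in_RK_def using B_ring_kalg B_ring_vn_regular B_ring_loewy_length[OF assms] by simp
qed

lemma B_ring_top_layer_dim: "top_layer_dim (B_ring \<alpha> n :: ('o pt \<Rightarrow> 'k::field) ring) falg_smult \<alpha> n"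
  unfolding top_layer_dim_def using cone_basis_top_card layer_iso_cone_basis[OF order_refl] by blast

lemma B_ring_countable_type:
  assumes "0 < n" "countable_ord \<alpha>"
  shows "countable_type (B_ring \<alpha> n :: ('o pt \<Rightarrow> 'k::field) ring) falg_smult \<alpha>"
proof -
  have "\<exists>\<Lambda>. countable \<Lambda> \<and> \<Lambda> \<noteq> {} \<and> layer_iso (B_ring \<alpha> n :: ('o pt \<Rightarrow> 'k) ring) falg_smult \<beta> \<Lambda>"
    if "\<beta> \<le> \<alpha>" for \<beta>
    using cone_basis_countable[OF assms(2)] cone_basis_nonempty[OF assms(1) that] layer_iso_cone_basis[OF that]
    by blast
  then show ?thesis unfolding countable_type_def using assms(2) by simp
qed

end

theorem lemma6p6:
  fixes \<alpha> :: "'o::wellorder" and n :: nat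
  assumes "0 < n"
  shows "in_RK (B_ring \<alpha> n :: ('o pt \<Rightarrow> 'k::field) ring) falg_smult \<alpha>
       \<and> top_layer_dim (B_ring \<alpha> n :: ('o pt \<Rightarrow> 'k::field) ring) falg_smult \<alpha> n
       \<and> (countable_ord \<alpha> \<longrightarrow> countable_type (B_ring \<alpha> n :: ('o pt \<Rightarrow> 'k::field) ring) falg_smult \<alpha>)"
  using forest.B_ring_in_RK[OF assms] forest.B_ring_top_layer_dim forest.B_ring_countable_type[OF assms]
  by blast

end
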